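(* On $\mathbb{R}^4$ with coordinates $x,y,z,t$, let $h=h(\rho,t)$ be a smooth function on $(0,\infty)\times\mathbb{R}$ such that $0$ is a regular value of $h$, the level set $\{h=0\}$ is a connected curve meeting the $\rho$-axis in exactly one point $(\rho_0,0)$ with $\rho_0>0$, $h_t$ vanishes along $\{h=0\}$ only at $(\rho_0,0)$, and $\rho h_\rho-th_t>0$ along $\{h=0\}$. Set $H(x,y,z,t)=h(x^2+y^2+z^2,t)$, $M=\{H=0\}\subset\mathbb{R}^4$, and let $f\colon M\to\mathbb{R}$ be the restriction of $(x,y,z,t)\mapsto x^2+y^2$. If $h_{tt}(\rho_0,0)<0$, then $f$ is a Morse--Bott function on $M$.
   Context: This is the model for a contact connected sum: $\mathbb{R}^4$ carries $\omega=\mathrm{d} x\wedge\mathrm{d} y+\mathrm{d} z\wedge\mathrm{d} t$ and the Liouville vector field $\tfrac12x\partial_x+\tfrac12y\partial_y+2z\partial_z-t\partial_t$, which is transverse to $M$; the curve $\{h=0\}$ in the $(\rho,t)$-half-plane is U-shaped with vertex $(\rho_0,0)$, its two ends running along the lines $t=\pm1$ for large $\rho$. A Morse--Bott function is a smooth function whose critical set is a submanifold along which the Hessian is non-degenerate in transverse directions. *)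

theory Defs
  imports "HOL-Analysis.Analysis"
begin

fun iter_dderiv :: "('a::real_normed_vector \<Rightarrow> 'b::real_normed_vector) \<Rightarrow> 'a list \<Rightarrow> 'a \<Rightarrow> 'b" where
  "iter_dderiv f [] = f"
| "iter_dderiv f (v # vs) = (\<lambda>x. frechet_derivative (iter_dderiv f vs) (at x) v)"

text \<open>f is C-infinity on the open set S: all iterated derivatives exist (are Frechet
  differentiable) at every point of S. In finite dimensions this is exactly smoothness.\<close>
definition smooth_on :: "'a::euclidean_space set \<Rightarrow> ('a \<Rightarrow> 'b::real_normed_vector) \<Rightarrow> bool" where
  "smooth_on S f \<longleftrightarrow> open S \<and> (\<forall>vs. \<forall>x\<in>S. iter_dderiv f vs differentiable (at x))"

definition dirderiv :: "('a::real_normed_vector \<Rightarrow> 'b::real_normed_vector) \<Rightarrow> 'a \<Rightarrow> 'a \<Rightarrow> 'b" where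
  "dirderiv f v x = frechet_derivative f (at x) v"

definition dirderiv2 :: "('a::real_normed_vector \<Rightarrow> 'b::real_normed_vector) \<Rightarrow> 'a \<Rightarrow> 'a \<Rightarrow> 'a \<Rightarrow> 'b" where
  "dirderiv2 f v w x = frechet_derivative (\<lambda>y. frechet_derivative f (at y) v) (at x) w"

definition submanifold_chart ::
  "'a::euclidean_space set \<Rightarrow> 'a \<Rightarrow> 'a set \<Rightarrow> ('a \<Rightarrow> 'a) \<Rightarrow> 'a set \<Rightarrow> bool" where
  "submanifold_chart S p W \<Psi> L \<longleftrightarrow>
     open W \<and> p \<in> W \<and> inj_on \<Psi> W \<and> open (\<Psi> ` W) \<and>
     smooth_on W \<Psi> \<and> smooth_on (\<Psi> ` W) (inv_into W \<Psi>) \<and>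
     subspace L \<and> \<Psi> ` (S \<inter> W) = L \<inter> \<Psi> ` W"

definition embedded_submanifold :: "'a::euclidean_space set \<Rightarrow> bool" where
  "embedded_submanifold S \<longleftrightarrow> (\<forall>p\<in>S. \<exists>W \<Psi> L. submanifold_chart S p W \<Psi> L)"

text \<open>Tangent space (independent of the chart).\<close>
definition tangent_space :: "'a::euclidean_space set \<Rightarrow> 'a \<Rightarrow> 'a set" where
  "tangent_space S p = {v. \<exists>W \<Psi> L. submanifold_chart S p W \<Psi> L \<and> frechet_derivative \<Psi> (at p) v \<in> L}"

definition crit_set :: "('a::euclidean_space \<Rightarrow> real) \<Rightarrow> 'a set \<Rightarrow> 'a set" where
  "crit_set F M = {p \<in> M. \<forall>v\<in>tangent_space M p. frechet_derivative F (at p) v = 0}"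

definition morse_bott_on :: "'a::euclidean_space set \<Rightarrow> ('a \<Rightarrow> real) \<Rightarrow> bool" where
  "morse_bott_on M F \<longleftrightarrow>
     embedded_submanifold M \<and> embedded_submanifold (crit_set F M) \<and>
     (\<forall>p\<in>crit_set F M. \<forall>W \<Psi> L. submanifold_chart M p W \<Psi> L \<longrightarrow>
        (\<forall>v\<in>tangent_space M p.
           (\<forall>w\<in>tangent_space M p.
              dirderiv2 (F \<circ> inv_into W \<Psi>) (frechet_derivative \<Psi> (at p) v)
                 (frechet_derivative \<Psi> (at p) w) (\<Psi> p) = 0)
           \<longleftrightarrow> v \<in> tangent_space (crit_set F M) p))"

end

theory Submission
  imports Defs
begin

text \<open>
  \<open>M = {H = 0}\<close> is a regular level set of \<open>H(x,y,z,t) = h(x\<^sup>2 + y\<^sup>2 + z\<^sup>2, t)\<close>, so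
  \<open>T\<^sub>pM = ker dH\<close>, and \<open>p\<close> is critical for \<open>f = x\<^sup>2 + y\<^sup>2\<close> iff \<open>df\<close> vanishes on \<open>ker dH\<close>.
  Testing \<open>df\<close> on two explicit tangent vectors shows that either \<open>x = y = 0\<close>, or \<open>z = 0\<close> and
  \<open>h\<^sub>t = 0\<close>, which by the hypotheses on \<open>h\<close> is the circle \<open>x\<^sup>2 + y\<^sup>2 = \<rho>\<^sub>0, z = t = 0\<close>.
  Both pieces are cut out by independent equations, so replacing one coordinate by the
  defining function (inverse function theorem) gives submanifold charts and tangent spaces.
  In a chart of \<open>M\<close> the Hessian of \<open>f\<close> at a critical point is \<open>Hess f - \<lambda> Hess H\<close> on \<open>T\<^sub>pM\<close>,
  with Lagrange multiplier \<open>\<lambda>\<close>. On the axis part \<open>\<lambda> = 0\<close> and the Hessian is \<open>2 (dx\<^sup>2 + dy\<^sup>2)\<close>;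
  on the circle \<open>\<lambda> = 1 / h\<^sub>\<rho>\<close> and it is \<open>-2 dz\<^sup>2 - (h\<^sub>t\<^sub>t / h\<^sub>\<rho>) dt\<^sup>2\<close>, nondegenerate
  transversally since \<open>h\<^sub>t\<^sub>t < 0 < h\<^sub>\<rho>\<close> (the latter from \<open>\<rho> h\<^sub>\<rho> - t h\<^sub>t > 0\<close> at \<open>t = 0\<close>).
  In both cases the kernel is the tangent space of the critical set.
\<close>

section \<open>Smoothness\<close>

abbreviation fd :: "('a::real_normed_vector \<Rightarrow> 'b::real_normed_vector) \<Rightarrow> 'a \<Rightarrow> 'a \<Rightarrow> 'b" where
  "fd f x \<equiv> frechet_derivative f (at x)"

lemma fd_eq: "(f has_derivative f') (at x) \<Longrightarrow> fd f x = f'"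
  by (metis frechet_derivative_at)

lemma has_derivative_fd: "f differentiable at x \<Longrightarrow> (f has_derivative fd f x) (at x)"
  by (simp add: frechet_derivative_works)

lemma fd_bounded_linear: "bounded_linear f \<Longrightarrow> fd f x = f"
  by (simp add: fd_eq bounded_linear_imp_has_derivative)

lemma differentiable_transform_within_open:
  assumes "f differentiable at x" "open S" "x \<in> S" "\<And>y. y \<in> S \<Longrightarrow> f y = g y"
  shows "g differentiable at x"
  using assms has_derivative_transform_within_open unfolding differentiable_def by blast

lemma linear_euclidean_expansion:
  fixes f :: "'a::euclidean_space \<Rightarrow> 'b::real_normed_vector"
  assumes "linear f"
  shows "f a = (\<Sum>i\<in>Basis. (a \<bullet> i) *\<^sub>R f i)"
proof -
  have "f a = f (\<Sum>i\<in>Basis. (a \<bullet> i) *\<^sub>R i)" by (simp add: euclidean_representation)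
  also have "\<dots> = (\<Sum>i\<in>Basis. (a \<bullet> i) *\<^sub>R f i)"
    using assms by (simp add: linear_sum linear_scale)
  finally show ?thesis .
qed

lemma fd_euclidean_expansion:
  fixes f :: "'a::euclidean_space \<Rightarrow> 'b::real_normed_vector"
  assumes "f differentiable at x"
  shows "fd f x a = (\<Sum>i\<in>Basis. (a \<bullet> i) *\<^sub>R fd f x i)"
  using linear_euclidean_expansion linear_frechet_derivative[OF assms] by blast

text \<open>\<^const>\<open>iter_dderiv\<close> recurses on the outermost derivative; this recursion peels off the
  innermost one (it differentiates \<open>f\<close> first), the form the closure properties below induct on.\<close>

fun iter_differentiable_on ::
  "nat \<Rightarrow> 'a::real_normed_vector set \<Rightarrow> ('a \<Rightarrow> 'b::real_normed_vector) \<Rightarrow> bool" where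
  "iter_differentiable_on 0 S f \<longleftrightarrow> (\<forall>x\<in>S. f differentiable at x)"
| "iter_differentiable_on (Suc k) S f \<longleftrightarrow>
     (\<forall>x\<in>S. f differentiable at x) \<and> (\<forall>v. iter_differentiable_on k S (\<lambda>x. fd f x v))"

lemma iter_dderiv_append: "iter_dderiv f (vs @ [v]) = iter_dderiv (\<lambda>x. fd f x v) vs"
  by (induction vs) simp_all

lemma iter_differentiable_on_iff:
  "iter_differentiable_on k S f \<longleftrightarrow>
     (\<forall>vs. length vs \<le> k \<longrightarrow> (\<forall>x\<in>S. iter_dderiv f vs differentiable at x))"
proof (induction k arbitrary: f)
  case 0
  then show ?case by auto
next
  case (Suc k)
  show ?case
  proof
    assume f: "iter_differentiable_on (Suc k) S f"
    show "\<forall>vs. length vs \<le> Suc k \<longrightarrow> (\<forall>x\<in>S. iter_dderiv f vs differentiable at x)"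
    proof (intro allI impI)
      fix vs :: "'a list"
      assume "length vs \<le> Suc k"
      then show "\<forall>x\<in>S. iter_dderiv f vs differentiable at x"
        by (cases vs rule: rev_cases) (use f Suc.IH in \<open>auto simp: iter_dderiv_append\<close>)
    qed
  next
    assume f: "\<forall>vs. length vs \<le> Suc k \<longrightarrow> (\<forall>x\<in>S. iter_dderiv f vs differentiable at x)"
    have "iter_differentiable_on k S (\<lambda>x. fd f x v)" for v
      unfolding Suc.IH using f[rule_format, of "_ @ [v]"] by (auto simp: iter_dderiv_append)
    then show "iter_differentiable_on (Suc k) S f"
      using f[rule_format, of "[]"] by simp
  qed
qed

lemma smooth_on_iff_iter_differentiable_on:
  "smooth_on S f \<longleftrightarrow> open S \<and> (\<forall>k. iter_differentiable_on k S f)"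
  unfolding smooth_on_def iter_differentiable_on_iff by auto

lemma iter_differentiable_onD: "iter_differentiable_on k S f \<Longrightarrow> x \<in> S \<Longrightarrow> f differentiable at x"
  by (cases k) auto

lemma iter_differentiable_on_Suc_imp: "iter_differentiable_on (Suc k) S f \<Longrightarrow> iter_differentiable_on k S f"
  by (induction k arbitrary: f) auto

lemma iter_differentiable_on_subset:
  "iter_differentiable_on k U f \<Longrightarrow> S \<subseteq> U \<Longrightarrow> iter_differentiable_on k S f"
  by (induction k arbitrary: f) auto

lemma iter_differentiable_on_cong:
  assumes "open S" "\<And>x. x \<in> S \<Longrightarrow> f x = g x" "iter_differentiable_on k S f"
  shows "iter_differentiable_on k S g"
  using assms(2,3)
proof (induction k arbitrary: f g)
  case 0
  then show ?case
    using assms(1) differentiable_transform_within_open by (metis iter_differentiable_on.simps(1))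
next
  case (Suc k)
  have "iter_differentiable_on k S (\<lambda>x. fd g x v)" for v
  proof (rule Suc.IH[of "\<lambda>x. fd f x v"])
    show "iter_differentiable_on k S (\<lambda>x. fd f x v)" using Suc.prems by auto
    show "fd f x v = fd g x v" if "x \<in> S" for x
      using frechet_derivative_transform_within_open[of f x S g] Suc.prems assms(1) that by auto
  qed
  then show ?case
    using Suc.prems assms(1) differentiable_transform_within_open
    by (metis iter_differentiable_on.simps(2))
qed

lemma iter_differentiable_on_const: "iter_differentiable_on k S (\<lambda>x. c)"
  by (induction k arbitrary: c) auto

lemma iter_differentiable_on_bounded_linear:
  "bounded_linear f \<Longrightarrow> iter_differentiable_on k S f"
  by (cases k) (auto simp: fd_bounded_linear iter_differentiable_on_const bounded_linear_imp_differentiable)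

lemma iter_differentiable_on_add:
  assumes "open S" "iter_differentiable_on k S f" "iter_differentiable_on k S g"
  shows "iter_differentiable_on k S (\<lambda>x. f x + g x)"
  using assms(2,3)
proof (induction k arbitrary: f g)
  case 0
  then show ?case by auto
next
  case (Suc k)
  have "iter_differentiable_on k S (\<lambda>x. fd (\<lambda>x. f x + g x) x v)" for v
  proof (rule iter_differentiable_on_cong[OF assms(1)])
    show "iter_differentiable_on k S (\<lambda>x. fd f x v + fd g x v)" using Suc by auto
    show "fd f x v + fd g x v = fd (\<lambda>x. f x + g x) x v" if "x \<in> S" for x
      using Suc.prems that by (simp add: fd_eq[OF has_derivative_add[OF has_derivative_fd has_derivative_fd]])
  qed
  then show ?case using Suc.prems by auto
qed

lemma iter_differentiable_on_scaleR:
  fixes f :: "'a::real_normed_vector \<Rightarrow> real"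
  assumes "open S" "iter_differentiable_on k S f" "iter_differentiable_on k S g"
  shows "iter_differentiable_on k S (\<lambda>x. f x *\<^sub>R g x)"
  using assms(2,3)
proof (induction k arbitrary: f g)
  case 0
  then show ?case by auto
next
  case (Suc k)
  have f: "iter_differentiable_on k S f" and g: "iter_differentiable_on k S g"
    using iter_differentiable_on_Suc_imp Suc.prems by blast+
  have "iter_differentiable_on k S (\<lambda>x. fd (\<lambda>x. f x *\<^sub>R g x) x v)" for v
  proof (rule iter_differentiable_on_cong[OF assms(1)])
    show "iter_differentiable_on k S (\<lambda>x. f x *\<^sub>R fd g x v + fd f x v *\<^sub>R g x)"
      using Suc.IH[OF f] Suc.IH[OF _ g] Suc.prems by (intro iter_differentiable_on_add assms) auto
    show "f x *\<^sub>R fd g x v + fd f x v *\<^sub>R g x = fd (\<lambda>x. f x *\<^sub>R g x) x v" if "x \<in> S" for x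
      using Suc.prems that by (simp add: fd_eq[OF has_derivative_scaleR[OF has_derivative_fd has_derivative_fd]])
  qed
  then show ?case using Suc.prems by auto
qed

lemma iter_differentiable_on_mult:
  fixes f g :: "'a::real_normed_vector \<Rightarrow> real"
  shows "open S \<Longrightarrow> iter_differentiable_on k S f \<Longrightarrow> iter_differentiable_on k S g \<Longrightarrow>
    iter_differentiable_on k S (\<lambda>x. f x * g x)"
  using iter_differentiable_on_scaleR by fastforce

lemma iter_differentiable_on_diff:
  assumes "open S" "iter_differentiable_on k S f" "iter_differentiable_on k S g"
  shows "iter_differentiable_on k S (\<lambda>x. f x - g x)"
  using iter_differentiable_on_add[OF assms(1,2)
      iter_differentiable_on_scaleR[OF assms(1) iter_differentiable_on_const[of k S "-1"] assms(3)]]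
  by simp

lemma iter_differentiable_on_sum:
  assumes "open S" "finite A" "\<And>i. i \<in> A \<Longrightarrow> iter_differentiable_on k S (f i)"
  shows "iter_differentiable_on k S (\<lambda>x. \<Sum>i\<in>A. f i x)"
  using assms(2,3)
  by (induction A rule: finite_induct)
    (auto simp: iter_differentiable_on_const intro!: iter_differentiable_on_add assms(1))

lemma iter_differentiable_on_inverse:
  fixes f :: "'a::real_normed_vector \<Rightarrow> real"
  assumes "open S" "iter_differentiable_on k S f" "\<And>x. x \<in> S \<Longrightarrow> f x \<noteq> 0"
  shows "iter_differentiable_on k S (\<lambda>x. inverse (f x))"
  using assms(2)
proof (induction k)
  case 0
  then show ?case using assms(3) by simp
next
  case (Suc k)
  have IH: "iter_differentiable_on k S (\<lambda>x. inverse (f x))"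
    using Suc iter_differentiable_on_Suc_imp by blast
  have "iter_differentiable_on k S (\<lambda>x. fd (\<lambda>x. inverse (f x)) x v)" for v
  proof (rule iter_differentiable_on_cong[OF assms(1)])
    have "iter_differentiable_on k S (\<lambda>x. fd f x v)" using Suc.prems by simp
    then have "iter_differentiable_on k S (\<lambda>x. 0 - inverse (f x) * fd f x v * inverse (f x))"
      by (intro iter_differentiable_on_diff iter_differentiable_on_mult iter_differentiable_on_const
          assms(1) IH)
    then show "iter_differentiable_on k S (\<lambda>x. - (inverse (f x) * fd f x v * inverse (f x)))"
      by simp
    show "- (inverse (f x) * fd f x v * inverse (f x)) = fd (\<lambda>x. inverse (f x)) x v" if "x \<in> S" for x
      using Deriv.has_derivative_inverse[of f x "fd f x" UNIV, OF assms(3)[OF that] has_derivative_fd]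
        Suc.prems that
      by (simp add: fd_eq)
  qed
  then show ?case using Suc.prems assms(3) by simp
qed

lemma iter_differentiable_on_bounded_linear_comp:
  assumes "open S" "bounded_linear L" "iter_differentiable_on k S g"
  shows "iter_differentiable_on k S (\<lambda>x. L (g x))"
  using assms(3)
proof (induction k arbitrary: g)
  have dL: "\<And>g x. g differentiable at x \<Longrightarrow> (\<lambda>x. L (g x)) differentiable at x"
    by (rule differentiable_compose[OF bounded_linear_imp_differentiable[OF assms(2)]])
  {
    case 0
    then show ?case by (simp add: dL)
  next
next
  case (Suc k)
  have "iter_differentiable_on k S (\<lambda>x. fd (\<lambda>x. L (g x)) x v)" for v
  proof (rule iter_differentiable_on_cong[OF assms(1)])
    show "iter_differentiable_on k S (\<lambda>x. L (fd g x v))" using Suc.IH Suc.prems by simp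
    show "L (fd g x v) = fd (\<lambda>x. L (g x)) x v" if "x \<in> S" for x
      using Suc.prems that by (simp add: fd_eq[OF bounded_linear.has_derivative[OF assms(2) has_derivative_fd]])
  qed
  then show ?case using Suc.prems by (simp add: dL)
  }
qed

lemma iter_differentiable_on_Pair:
  assumes "open S" "iter_differentiable_on k S f" "iter_differentiable_on k S g"
  shows "iter_differentiable_on k S (\<lambda>x. (f x, g x))"
  using assms(2,3)
proof (induction k arbitrary: f g)
  case 0
  then show ?case by simp
next
  case (Suc k)
  have "iter_differentiable_on k S (\<lambda>x. fd (\<lambda>x. (f x, g x)) x v)" for v
  proof (rule iter_differentiable_on_cong[OF assms(1)])
    show "iter_differentiable_on k S (\<lambda>x. (fd f x v, fd g x v))"
      using Suc by simp
    show "(fd f x v, fd g x v) = fd (\<lambda>x. (f x, g x)) x v" if "x \<in> S" for x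
      using Suc.prems that by (simp add: fd_eq[OF has_derivative_Pair[OF has_derivative_fd has_derivative_fd]])
  qed
  then show ?case using Suc.prems by simp
qed

lemma smooth_on_imp_differentiable: "smooth_on S f \<Longrightarrow> x \<in> S \<Longrightarrow> f differentiable at x"
  unfolding smooth_on_iff_iter_differentiable_on using iter_differentiable_onD by blast

lemma smooth_on_fd: "smooth_on S f \<Longrightarrow> smooth_on S (\<lambda>x. fd f x v)"
  unfolding smooth_on_iff_iter_differentiable_on by (metis iter_differentiable_on.simps(2))

text \<open>The outer function must be smooth, not just \<open>k\<close> times differentiable: the chain rule
  turns the derivative of \<open>f \<circ> g\<close> into derivatives of \<open>f\<close> composed with \<open>g\<close>.\<close>

lemma iter_differentiable_on_compose:
  fixes f :: "'b::euclidean_space \<Rightarrow> 'c::real_normed_vector" and g :: "'a::real_normed_vector \<Rightarrow> 'b"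
  assumes "open S" "iter_differentiable_on k S g" "g ` S \<subseteq> V" "smooth_on V f"
  shows "iter_differentiable_on k S (\<lambda>x. f (g x))"
  using assms(2,4)
proof (induction k arbitrary: f)
  case 0
  then show ?case
    using assms(3) differentiable_chain_at[of g _ f] smooth_on_imp_differentiable
    by (fastforce simp: o_def)
next
  case (Suc k)
  have dg: "\<And>x. x \<in> S \<Longrightarrow> g differentiable at x" using Suc.prems by simp
  have df: "\<And>x. x \<in> S \<Longrightarrow> f differentiable at (g x)"
    using Suc.prems(2) assms(3) smooth_on_imp_differentiable by blast
  have "iter_differentiable_on k S (\<lambda>x. fd (\<lambda>x. f (g x)) x v)" for v
  proof (rule iter_differentiable_on_cong[OF assms(1)])
    have "iter_differentiable_on k S (\<lambda>x. fd f (g x) i)" for i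
    proof (rule Suc.IH)
      show "iter_differentiable_on k S g" using Suc.prems(1) iter_differentiable_on_Suc_imp by blast
      show "smooth_on V (\<lambda>y. fd f y i)" using Suc.prems(2) by (rule smooth_on_fd)
    qed
    moreover have "iter_differentiable_on k S (\<lambda>x. fd g x v \<bullet> i)" for i
      using Suc.prems(1) by (intro iter_differentiable_on_bounded_linear_comp[OF assms(1) bounded_linear_inner_left]) simp
    ultimately show "iter_differentiable_on k S (\<lambda>x. \<Sum>i\<in>Basis. (fd g x v \<bullet> i) *\<^sub>R fd f (g x) i)"
      by (intro iter_differentiable_on_sum iter_differentiable_on_scaleR assms(1)) auto
    show "(\<Sum>i\<in>Basis. (fd g x v \<bullet> i) *\<^sub>R fd f (g x) i) = fd (\<lambda>x. f (g x)) x v" if "x \<in> S" for x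
      using frechet_derivative_compose[of g x f] fd_euclidean_expansion[OF df, of x "fd g x v"] dg df that
      by (simp add: o_def)
  qed
  then show ?case
    using dg df differentiable_chain_at[of g _ f] by (simp add: o_def)
qed

lemma smooth_on_imp_continuous_on: "smooth_on S f \<Longrightarrow> continuous_on S f"
  using smooth_on_imp_differentiable
  by (metis continuous_at_imp_continuous_on differentiable_imp_continuous_within)

lemma smooth_on_subset:
  assumes "smooth_on U f" "open S" "S \<subseteq> U"
  shows "smooth_on S f"
  using assms(1,2) unfolding smooth_on_iff_iter_differentiable_on
  by (simp add: iter_differentiable_on_subset[OF _ assms(3)])

lemma smooth_on_cong:
  assumes "smooth_on S f" "\<And>x. x \<in> S \<Longrightarrow> f x = g x"
  shows "smooth_on S g"
  using assms(1) unfolding smooth_on_iff_iter_differentiable_on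
  by (simp add: iter_differentiable_on_cong[OF _ assms(2)])

lemma smooth_on_const: "open S \<Longrightarrow> smooth_on S (\<lambda>x. c)"
  unfolding smooth_on_iff_iter_differentiable_on by (simp add: iter_differentiable_on_const)

lemma smooth_on_bounded_linear: "open S \<Longrightarrow> bounded_linear f \<Longrightarrow> smooth_on S f"
  unfolding smooth_on_iff_iter_differentiable_on by (simp add: iter_differentiable_on_bounded_linear)

lemma smooth_on_add: "smooth_on S f \<Longrightarrow> smooth_on S g \<Longrightarrow> smooth_on S (\<lambda>x. f x + g x)"
  unfolding smooth_on_iff_iter_differentiable_on by (simp add: iter_differentiable_on_add)

lemma smooth_on_diff: "smooth_on S f \<Longrightarrow> smooth_on S g \<Longrightarrow> smooth_on S (\<lambda>x. f x - g x)"
  unfolding smooth_on_iff_iter_differentiable_on by (simp add: iter_differentiable_on_diff)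

lemma smooth_on_scaleR: "smooth_on S f \<Longrightarrow> smooth_on S g \<Longrightarrow> smooth_on S (\<lambda>x. f x *\<^sub>R g x)"
  unfolding smooth_on_iff_iter_differentiable_on by (simp add: iter_differentiable_on_scaleR)

lemma smooth_on_mult:
  "smooth_on S (f :: _ \<Rightarrow> real) \<Longrightarrow> smooth_on S g \<Longrightarrow> smooth_on S (\<lambda>x. f x * g x)"
  unfolding smooth_on_iff_iter_differentiable_on by (simp add: iter_differentiable_on_mult)

lemma smooth_on_Pair: "smooth_on S f \<Longrightarrow> smooth_on S g \<Longrightarrow> smooth_on S (\<lambda>x. (f x, g x))"
  unfolding smooth_on_iff_iter_differentiable_on by (simp add: iter_differentiable_on_Pair)

lemma smooth_on_compose:
  fixes f :: "'b::euclidean_space \<Rightarrow> 'c::real_normed_vector"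
  shows "smooth_on S g \<Longrightarrow> g ` S \<subseteq> V \<Longrightarrow> smooth_on V f \<Longrightarrow> smooth_on S (\<lambda>x. f (g x))"
  unfolding smooth_on_iff_iter_differentiable_on[of S]
  using iter_differentiable_on_compose[of S _ g V f] by blast

section \<open>Straightening coordinates\<close>

definition replace_coord :: "'a::euclidean_space \<Rightarrow> ('a \<Rightarrow> real) \<Rightarrow> 'a \<Rightarrow> 'a" where
  "replace_coord e l x = x - (x \<bullet> e) *\<^sub>R e + l x *\<^sub>R e"

definition replace_coord_inv :: "'a::euclidean_space \<Rightarrow> ('a \<Rightarrow> real) \<Rightarrow> 'a \<Rightarrow> 'a" where
  "replace_coord_inv e l w = w + ((w \<bullet> e - l w) / l e) *\<^sub>R e"

lemma replace_coord_inner_Basis: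
  assumes "e \<in> Basis"
  shows "replace_coord e l x \<bullet> e = l x"
    and "j \<in> Basis \<Longrightarrow> j \<noteq> e \<Longrightarrow> replace_coord e l x \<bullet> j = x \<bullet> j"
  using assms by (simp_all add: replace_coord_def inner_add_left inner_diff_left inner_not_same_Basis)

lemma replace_coord_inv_inverse:
  fixes e :: "'a::euclidean_space"
  assumes "linear l" "l e \<noteq> 0" "e \<in> Basis"
  shows "replace_coord_inv e l (replace_coord e l v) = v"
    and "replace_coord e l (replace_coord_inv e l w) = w"
proof -
  have l_replace: "l (replace_coord e l v) = l v - (v \<bullet> e) * l e + l v * l e" for v
    unfolding replace_coord_def using assms(1) by (simp add: linear_diff linear_add linear_scale)
  have "(replace_coord e l v \<bullet> e - l (replace_coord e l v)) / l e = v \<bullet> e - l v"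
    unfolding replace_coord_inner_Basis(1)[OF assms(3)] l_replace using assms(2)
    by (simp add: field_simps)
  then have "replace_coord_inv e l (replace_coord e l v) = replace_coord e l v + (v \<bullet> e - l v) *\<^sub>R e"
    by (simp add: replace_coord_inv_def)
  then show "replace_coord_inv e l (replace_coord e l v) = v"
    by (simp add: replace_coord_def algebra_simps)
  define c where "c = (w \<bullet> e - l w) / l e"
  have "replace_coord_inv e l w \<bullet> e = w \<bullet> e + c"
    using assms(3) by (simp add: replace_coord_inv_def c_def inner_add_left)
  moreover have "l (replace_coord_inv e l w) = w \<bullet> e"
    using assms(1,2) by (simp add: replace_coord_inv_def linear_add linear_scale field_simps)
  ultimately show "replace_coord e l (replace_coord_inv e l w) = w"
    by (simp add: replace_coord_def replace_coord_inv_def c_def[symmetric] algebra_simps)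
qed

lemma linear_replace_coord: "linear l \<Longrightarrow> linear (replace_coord e l)"
  unfolding replace_coord_def linear_iff
  by (simp add: linear_add linear_scale algebra_simps)

lemma linear_replace_coord_inv: "linear l \<Longrightarrow> linear (replace_coord_inv e l)"
  unfolding replace_coord_inv_def linear_iff
  by (simp add: linear_add linear_scale linear_diff algebra_simps
      diff_divide_distrib add_divide_distrib)

lemma bounded_linear_remove_coord: "bounded_linear (\<lambda>x::'a::euclidean_space. x - (x \<bullet> e) *\<^sub>R e)"
  by (intro bounded_linear_sub bounded_linear_ident
      bounded_linear_compose[OF bounded_linear_scaleR_left bounded_linear_inner_left])

lemma has_derivative_replace_coord:
  assumes "(H has_derivative H') (at x)"
  shows "(replace_coord e H has_derivative replace_coord e H') (at x)"
proof -
  have "((\<lambda>x. (x - (x \<bullet> e) *\<^sub>R e) + H x *\<^sub>R e) has_derivative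
      (\<lambda>v. (v - (v \<bullet> e) *\<^sub>R e) + H' v *\<^sub>R e)) (at x)"
    by (intro has_derivative_add bounded_linear_imp_has_derivative bounded_linear_remove_coord
        has_derivative_scaleR_left assms)
  then show ?thesis unfolding replace_coord_def by simp
qed

lemma smooth_on_replace_coord:
  assumes "smooth_on U H"
  shows "smooth_on U (replace_coord e H)"
proof -
  have U: "open U" using assms by (simp add: smooth_on_def)
  show ?thesis
    unfolding replace_coord_def[abs_def]
    by (intro smooth_on_add smooth_on_scaleR smooth_on_bounded_linear[OF U bounded_linear_remove_coord]
        smooth_on_const[OF U] assms)
qed

text \<open>No general smoothness theorem for inverse maps is needed: the derivative of a local
  inverse of \<open>replace_coord e H\<close> is given by the explicit formula \<open>replace_coord_inv\<close>.\<close>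

lemma smooth_on_inverse_of_replace_coord:
  fixes H :: "'a::euclidean_space \<Rightarrow> real"
  assumes V: "open V" and H: "smooth_on U H" and gV: "g ` V \<subseteq> U"
    and nz: "\<And>y. y \<in> V \<Longrightarrow> fd H (g y) e \<noteq> 0"
    and dg: "\<And>y. y \<in> V \<Longrightarrow> (g has_derivative replace_coord_inv e (fd H (g y))) (at y)"
  shows "smooth_on V g"
proof -
  have "iter_differentiable_on k V g" for k
  proof (induction k)
    case 0
    then show ?case using dg by (auto simp: differentiable_def)
  next
    case (Suc k)
    have "iter_differentiable_on k V (\<lambda>y. fd g y w)" for w
    proof (rule iter_differentiable_on_cong[OF V])
      show "w + ((w \<bullet> e - fd H (g y) w) * inverse (fd H (g y) e)) *\<^sub>R e = fd g y w" if "y \<in> V" for y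
        using fd_eq[OF dg[OF that]] by (simp add: replace_coord_inv_def divide_inverse)
      have "iter_differentiable_on k V (\<lambda>y. fd H (g y) v)" for v
        by (rule iter_differentiable_on_compose[OF V Suc gV smooth_on_fd[OF H]])
      then show "iter_differentiable_on k V
          (\<lambda>y. w + ((w \<bullet> e - fd H (g y) w) * inverse (fd H (g y) e)) *\<^sub>R e)"
        using nz
        by (intro iter_differentiable_on_add iter_differentiable_on_scaleR iter_differentiable_on_mult
            iter_differentiable_on_diff iter_differentiable_on_inverse iter_differentiable_on_const V)
          auto
    qed
    then show ?case using dg by (auto simp: differentiable_def)
  qed
  then show ?thesis using V by (simp add: smooth_on_iff_iter_differentiable_on)
qed

lemma inv_replace_coord:
  fixes e :: "'a::euclidean_space"
  assumes "linear l" "l e \<noteq> 0" "e \<in> Basis"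
  shows "inv (replace_coord e l) = replace_coord_inv e l"
  by (rule inv_unique_comp) (auto simp: fun_eq_iff replace_coord_inv_inverse[OF assms])

lemma bounded_linear_replace_coord_fd:
  "smooth_on U H \<Longrightarrow> x \<in> U \<Longrightarrow> bounded_linear (replace_coord e (fd H x))"
  using smooth_on_imp_differentiable linear_frechet_derivative linear_replace_coord
    linear_conv_bounded_linear by blast

lemma continuous_on_Blinfun_replace_coord:
  assumes H: "smooth_on U H"
  shows "continuous_on U (\<lambda>x. Blinfun (replace_coord e (fd H x)))"
proof (rule continuous_on_blinfun_componentwise)
  fix i
  have "continuous_on U (\<lambda>x. fd H x i)"
    using smooth_on_imp_continuous_on smooth_on_fd[OF H] by blast
  then have "continuous_on U (\<lambda>x. i - (i \<bullet> e) *\<^sub>R e + fd H x i *\<^sub>R e)"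
    by (intro continuous_intros)
  then show "continuous_on U (\<lambda>x. blinfun_apply (Blinfun (replace_coord e (fd H x))) i)"
    by (rule continuous_on_eq)
      (simp add: bounded_linear_Blinfun_apply[OF bounded_linear_replace_coord_fd[OF H]] replace_coord_def)
qed

lemma replace_coord_local_inverse:
  fixes H :: "'a::euclidean_space \<Rightarrow> real"
  assumes H: "smooth_on U H" and p: "p \<in> U" and e: "e \<in> Basis" "fd H p e \<noteq> 0"
  obtains U' V g where "open U'" "U' \<subseteq> U" "p \<in> U'" "open V"
    "homeomorphism U' V (replace_coord e H) g" "\<And>y. y \<in> V \<Longrightarrow> fd H (g y) e \<noteq> 0"
    "\<And>y. y \<in> V \<Longrightarrow> (g has_derivative replace_coord_inv e (fd H (g y))) (at y)"
proof -
  have linH: "\<And>x. x \<in> U \<Longrightarrow> linear (fd H x)"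
    using smooth_on_imp_differentiable[OF H] linear_frechet_derivative by blast
  \<comment> \<open>on \<open>U0\<close> the derivative stays invertible, so the inverse has the expected derivative\<close>
  define U0 where "U0 = U \<inter> (\<lambda>x. fd H x e) -` (-{0})"
  have "open U" using H by (simp add: smooth_on_def)
  then have U0: "open U0" "p \<in> U0" "U0 \<subseteq> U"
    using continuous_open_preimage[OF smooth_on_imp_continuous_on[OF smooth_on_fd[OF H]], of "-{0}"]
      p e(2) by (auto simp: U0_def)
  define f' where "f' x = Blinfun (replace_coord e (fd H x))" for x
  have f': "\<And>x. x \<in> U \<Longrightarrow> blinfun_apply (f' x) = replace_coord e (fd H x)"
    unfolding f'_def using bounded_linear_Blinfun_apply bounded_linear_replace_coord_fd[OF H] by blast
  have "(replace_coord e H has_derivative blinfun_apply (f' x)) (at x)" if "x \<in> U0" for x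
    using has_derivative_replace_coord[OF has_derivative_fd[OF smooth_on_imp_differentiable[OF H]]]
      f' U0(3) that by auto
  moreover have "continuous_on U0 f'"
    unfolding f'_def by (rule continuous_on_subset[OF continuous_on_Blinfun_replace_coord[OF H] U0(3)])
  moreover have "bounded_linear (replace_coord_inv e (fd H p))"
    using linH[OF p] linear_replace_coord_inv linear_conv_bounded_linear by blast
  then have "Blinfun (replace_coord_inv e (fd H p)) o\<^sub>L f' p = id_blinfun"
    by (intro blinfun_eqI)
      (simp add: bounded_linear_Blinfun_apply f'[OF p] replace_coord_inv_inverse(1)[OF linH[OF p] e(2,1)])
  ultimately obtain U' V g g' where "open U'" "U' \<subseteq> U0" "p \<in> U'" "open V"
    and hom: "homeomorphism U' V (replace_coord e H) g"
    and dg: "\<And>y. y \<in> V \<Longrightarrow> (g has_derivative (g' y)) (at y)"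
    and g': "\<And>y. y \<in> V \<Longrightarrow> g' y = inv (blinfun_apply (f' (g y)))"
    using inverse_function_theorem[OF U0(1) _ _ U0(2)] by metis
  have gU0: "\<And>y. y \<in> V \<Longrightarrow> g y \<in> U0"
    using hom \<open>U' \<subseteq> U0\<close> by (auto simp: homeomorphism_def)
  then have nz: "\<And>y. y \<in> V \<Longrightarrow> fd H (g y) e \<noteq> 0" by (simp add: U0_def)
  have "(g has_derivative replace_coord_inv e (fd H (g y))) (at y)" if "y \<in> V" for y
    using dg[OF that] g'[OF that] f' inv_replace_coord[OF linH nz[OF that] e(1)] gU0[OF that] U0(3)
    by auto
  then show ?thesis
    using that \<open>open U'\<close> \<open>U' \<subseteq> U0\<close> U0(3) \<open>p \<in> U'\<close> \<open>open V\<close> hom nz by blast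
qed

lemma replace_coord_local_diffeo:
  fixes H :: "'a::euclidean_space \<Rightarrow> real"
  assumes H: "smooth_on U H" and p: "p \<in> U" and e: "e \<in> Basis" "fd H p e \<noteq> 0"
  obtains W where "open W" "p \<in> W" "W \<subseteq> U" "inj_on (replace_coord e H) W"
    "open (replace_coord e H ` W)" "smooth_on W (replace_coord e H)"
    "smooth_on (replace_coord e H ` W) (inv_into W (replace_coord e H))"
proof -
  obtain W V g where W: "open W" "W \<subseteq> U" "p \<in> W" "open V"
    and hom: "homeomorphism W V (replace_coord e H) g"
    and nz: "\<And>y. y \<in> V \<Longrightarrow> fd H (g y) e \<noteq> 0"
    and dg: "\<And>y. y \<in> V \<Longrightarrow> (g has_derivative replace_coord_inv e (fd H (g y))) (at y)"
    using replace_coord_local_inverse[OF H p e] by blast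
  have img: "replace_coord e H ` W = V" "g ` V = W"
    and inv: "\<And>x. x \<in> W \<Longrightarrow> g (replace_coord e H x) = x"
    and inv': "\<And>y. y \<in> V \<Longrightarrow> replace_coord e H (g y) = y"
    using hom by (auto simp: homeomorphism_def)
  have inj: "inj_on (replace_coord e H) W" by (rule inj_on_inverseI[of _ g]) (rule inv)
  have "smooth_on V g"
    by (rule smooth_on_inverse_of_replace_coord[OF W(4) H _ nz dg]) (use img W(2) in auto)
  then have "smooth_on V (inv_into W (replace_coord e H))"
    by (rule smooth_on_cong) (metis inv' img(2) image_eqI inj inv_into_f_f)
  moreover have "smooth_on W (replace_coord e H)"
    using smooth_on_subset[OF smooth_on_replace_coord[OF H] W(1,2)] .
  ultimately show ?thesis
    using that W inj img(1) by auto
qed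

section \<open>Charts, tangent spaces and Hessians\<close>

lemma submanifold_chartD:
  assumes "submanifold_chart S p W \<Psi> L"
  shows "open W" "p \<in> W" "inj_on \<Psi> W" "open (\<Psi> ` W)" "smooth_on W \<Psi>"
    "smooth_on (\<Psi> ` W) (inv_into W \<Psi>)" "subspace L" "\<Psi> ` (S \<inter> W) = L \<inter> \<Psi> ` W"
  using assms unfolding submanifold_chart_def by auto

lemma submanifold_chart_image_mem:
  "submanifold_chart S p W \<Psi> L \<Longrightarrow> p \<in> S \<Longrightarrow> \<Psi> p \<in> L"
  using submanifold_chartD(2,8) by blast

lemma submanifold_chart_inv_into_mem:
  assumes c: "submanifold_chart S p W \<Psi> L" and y: "y \<in> L" "y \<in> \<Psi> ` W"
  shows "inv_into W \<Psi> y \<in> S \<inter> W"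
proof -
  have "y \<in> \<Psi> ` (S \<inter> W)" using submanifold_chartD(8)[OF c] y by auto
  then show ?thesis using inv_into_f_f[OF submanifold_chartD(3)[OF c]] by auto
qed

lemma submanifold_chart_inv_derivative:
  assumes c: "submanifold_chart S p W \<Psi> L"
  shows "fd (inv_into W \<Psi>) (\<Psi> p) (fd \<Psi> p v) = v"
proof -
  note c = submanifold_chartD[OF c]
  have d\<Psi>: "\<Psi> differentiable at p" using smooth_on_imp_differentiable[OF c(5,2)] .
  have d\<phi>: "inv_into W \<Psi> differentiable at (\<Psi> p)" using smooth_on_imp_differentiable[OF c(6)] c(2) by blast
  have "((\<lambda>x. inv_into W \<Psi> (\<Psi> x)) has_derivative (fd (inv_into W \<Psi>) (\<Psi> p) \<circ> fd \<Psi> p)) (at p)"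
    using diff_chain_at[OF has_derivative_fd[OF d\<Psi>] has_derivative_fd[OF d\<phi>]] by (simp add: o_def)
  moreover have "((\<lambda>x. inv_into W \<Psi> (\<Psi> x)) has_derivative (\<lambda>x. x)) (at p)"
    by (rule has_derivative_transform_within_open[OF has_derivative_ident c(1,2)])
      (simp add: inv_into_f_f[OF c(3)])
  ultimately have "fd (inv_into W \<Psi>) (\<Psi> p) \<circ> fd \<Psi> p = (\<lambda>x. x)"
    using has_derivative_unique by blast
  then show ?thesis by (metis comp_apply)
qed

lemma submanifold_chart_pullback_vanishing:
  assumes c: "submanifold_chart S p W \<Psi> L" and U: "open U" "p \<in> U"
    and z: "\<And>x. x \<in> S \<Longrightarrow> x \<in> U \<Longrightarrow> G x = 0"
  obtains B where "open B" "\<Psi> p \<in> B" "B \<subseteq> \<Psi> ` W" "inv_into W \<Psi> ` B \<subseteq> U"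
    "\<And>y. y \<in> L \<Longrightarrow> y \<in> B \<Longrightarrow> G (inv_into W \<Psi> y) = 0"
proof
  note c' = submanifold_chartD[OF c]
  show "open (\<Psi> ` W \<inter> inv_into W \<Psi> -` U)"
    using continuous_open_preimage[OF smooth_on_imp_continuous_on[OF c'(6)] c'(4) U(1)] by blast
  show "\<Psi> p \<in> \<Psi> ` W \<inter> inv_into W \<Psi> -` U"
    using c'(2) U(2) inv_into_f_f[OF c'(3) c'(2)] by auto
  show "G (inv_into W \<Psi> y) = 0" if "y \<in> L" "y \<in> \<Psi> ` W \<inter> inv_into W \<Psi> -` U" for y
    using submanifold_chart_inv_into_mem[OF c that(1)] that(2) z by auto
qed auto

lemma fd_zero_along_subspace:
  fixes g :: "'a::euclidean_space \<Rightarrow> 'b::real_normed_vector"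
  assumes L: "subspace L" and B: "open B" "q \<in> B" and q: "q \<in> L"
    and dg: "g differentiable at q" and z: "\<And>y. y \<in> L \<Longrightarrow> y \<in> B \<Longrightarrow> g y = 0" and u: "u \<in> L"
  shows "fd g q u = 0"
proof -
  define \<gamma> where "\<gamma> = (\<lambda>s::real. q + s *\<^sub>R u)"
  have "(\<gamma> has_derivative (\<lambda>s. s *\<^sub>R u)) (at 0)"
    unfolding \<gamma>_def by (auto intro!: derivative_eq_intros)
  then have "((\<lambda>s. g (\<gamma> s)) has_derivative (\<lambda>s. fd g q (s *\<^sub>R u))) (at 0)"
    using diff_chain_at[of \<gamma> _ 0 g "fd g q"] has_derivative_fd[OF dg] by (simp add: \<gamma>_def o_def)
  moreover have "((\<lambda>s. g (\<gamma> s)) has_derivative (\<lambda>s. 0)) (at 0)"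
  proof (rule has_derivative_transform_within_open[OF has_derivative_const])
    show "open (\<gamma> -` B)" unfolding \<gamma>_def
      by (rule continuous_open_vimage[OF B(1)]) (intro continuous_intros)
    show "0 \<in> \<gamma> -` B" using B(2) by (simp add: \<gamma>_def)
    show "0 = g (\<gamma> s)" if "s \<in> \<gamma> -` B" for s
      using z L q u that by (auto simp: \<gamma>_def subspace_add subspace_scale)
  qed
  ultimately have "(\<lambda>s. fd g q (s *\<^sub>R u)) = (\<lambda>s. 0)" using has_derivative_unique by blast
  then show ?thesis by (metis scaleR_one)
qed

lemma dirderiv2_zero_along_subspace:
  fixes G :: "'a::euclidean_space \<Rightarrow> 'b::real_normed_vector"
  assumes L: "subspace L" and B: "open B" "q \<in> B" and q: "q \<in> L"
    and dG: "\<And>y. y \<in> B \<Longrightarrow> G differentiable at y" and d2G: "(\<lambda>y. fd G y u) differentiable at q"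
    and z: "\<And>y. y \<in> L \<Longrightarrow> y \<in> B \<Longrightarrow> G y = 0" and u: "u \<in> L" "u' \<in> L"
  shows "dirderiv2 G u u' q = 0"
  unfolding dirderiv2_def
proof (rule fd_zero_along_subspace[OF L B q d2G _ u(2)])
  show "fd G y u = 0" if "y \<in> L" "y \<in> B" for y
    by (rule fd_zero_along_subspace[OF L B(1) that(2,1) dG[OF that(2)] z u(1)])
qed

lemma tangent_spaceI: "submanifold_chart S p W \<Psi> L \<Longrightarrow> fd \<Psi> p v \<in> L \<Longrightarrow> v \<in> tangent_space S p"
  unfolding tangent_space_def by blast

lemma tangent_space_fd_vanishing:
  assumes p: "p \<in> S" and U: "open U" "p \<in> U" and dG: "G differentiable at p"
    and z: "\<And>x. x \<in> S \<Longrightarrow> x \<in> U \<Longrightarrow> G x = 0" and v: "v \<in> tangent_space S p"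
  shows "fd G p v = 0"
proof -
  obtain W \<Psi> L where c: "submanifold_chart S p W \<Psi> L" and u: "fd \<Psi> p v \<in> L"
    using v unfolding tangent_space_def by blast
  note c' = submanifold_chartD[OF c]
  define \<phi> where "\<phi> = inv_into W \<Psi>"
  have \<phi>p: "\<phi> (\<Psi> p) = p" unfolding \<phi>_def using inv_into_f_f[OF c'(3,2)] .
  have d\<phi>: "\<phi> differentiable at (\<Psi> p)"
    using smooth_on_imp_differentiable[OF c'(6)] c'(2) by (auto simp: \<phi>_def)
  have "\<exists>B. open B \<and> \<Psi> p \<in> B \<and> (\<forall>y\<in>L. y \<in> B \<longrightarrow> G (\<phi> y) = 0)"
    by (rule submanifold_chart_pullback_vanishing[OF c U z]) (auto simp: \<phi>_def)
  then obtain B where B: "open B" "\<Psi> p \<in> B" "\<And>y. y \<in> L \<Longrightarrow> y \<in> B \<Longrightarrow> G (\<phi> y) = 0"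
    by blast
  have "fd (\<lambda>y. G (\<phi> y)) (\<Psi> p) (fd \<Psi> p v) = 0"
  proof (rule fd_zero_along_subspace[OF c'(7) B(1,2) submanifold_chart_image_mem[OF c p] _ B(3) u])
    show "(\<lambda>y. G (\<phi> y)) differentiable at (\<Psi> p)"
      using differentiable_chain_at[OF d\<phi>] dG \<phi>p by (simp add: o_def)
  qed
  moreover have "fd (\<lambda>y. G (\<phi> y)) (\<Psi> p) = fd G p \<circ> fd \<phi> (\<Psi> p)"
    using frechet_derivative_compose[OF d\<phi>] dG \<phi>p by (simp add: o_def)
  ultimately show ?thesis using submanifold_chart_inv_derivative[OF c, of v] by (simp add: \<phi>_def)
qed

text \<open>The tangent space does not depend on the chart: for \<open>z \<bottom> L\<close> the function \<open>z \<bullet> \<Psi>\<close>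
  vanishes on \<open>S\<close> near \<open>p\<close>, so its derivative kills every tangent vector.\<close>

lemma submanifold_chart_fd_mem:
  assumes c: "submanifold_chart S p W \<Psi> L" and p: "p \<in> S" and v: "v \<in> tangent_space S p"
  shows "fd \<Psi> p v \<in> L"
proof -
  note c' = submanifold_chartD[OF c]
  have "z \<bullet> fd \<Psi> p v = 0" if z: "z \<in> orthogonal_comp L" for z
  proof -
    have "fd (\<lambda>x. z \<bullet> \<Psi> x) p v = 0"
    proof (rule tangent_space_fd_vanishing[OF p c'(1,2) _ _ v])
      show "(\<lambda>x. z \<bullet> \<Psi> x) differentiable at p"
        using smooth_on_imp_differentiable[OF c'(5,2)] by simp
      show "z \<bullet> \<Psi> x = 0" if "x \<in> S" "x \<in> W" for x
      proof -
        have "\<Psi> x \<in> L" using c'(8) that by blast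
        then have "\<Psi> x \<bullet> z = 0" using z by (simp add: orthogonal_comp_def orthogonal_def)
        then show ?thesis by (simp add: inner_commute)
      qed
    qed
    then show ?thesis
      using fd_eq[OF bounded_linear.has_derivative[OF bounded_linear_inner_right
            has_derivative_fd[OF smooth_on_imp_differentiable[OF c'(5,2)]]]]
      by simp
  qed
  then have "fd \<Psi> p v \<in> orthogonal_comp (orthogonal_comp L)"
    by (auto simp: orthogonal_comp_def orthogonal_def inner_commute)
  then show ?thesis using orthogonal_comp_self[OF c'(7)] by simp
qed

lemma dirderiv2_euclidean_expansion:
  fixes F :: "'a::euclidean_space \<Rightarrow> real"
  assumes V: "open V" "x \<in> V" and dF: "\<And>z. z \<in> V \<Longrightarrow> F differentiable at z"
    and d2F: "\<And>i. (\<lambda>z. fd F z i) differentiable at x"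
  shows "dirderiv2 F a b x = (\<Sum>i\<in>Basis. (a \<bullet> i) * fd (\<lambda>z. fd F z i) x b)"
proof -
  have "((\<lambda>z. \<Sum>i\<in>Basis. (a \<bullet> i) * fd F z i) has_derivative
      (\<lambda>b. \<Sum>i\<in>Basis. (a \<bullet> i) * fd (\<lambda>z. fd F z i) x b)) (at x)"
    by (intro has_derivative_sum has_derivative_mult_right has_derivative_fd d2F)
  then have "((\<lambda>z. fd F z a) has_derivative
      (\<lambda>b. \<Sum>i\<in>Basis. (a \<bullet> i) * fd (\<lambda>z. fd F z i) x b)) (at x)"
    by (rule has_derivative_transform_within_open[OF _ V])
      (use fd_euclidean_expansion[OF dF] in simp)
  then show ?thesis unfolding dirderiv2_def by (simp add: fd_eq)
qed

lemma dirderiv2_scaleR: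
  fixes F :: "'a::real_normed_vector \<Rightarrow> real"
  assumes V: "open V" "x \<in> V" and dF: "\<And>z. z \<in> V \<Longrightarrow> F differentiable at z"
    and d2F: "(\<lambda>z. fd F z e) differentiable at x"
  shows "dirderiv2 F (a *\<^sub>R e) (b *\<^sub>R e') x = a * b * dirderiv2 F e e' x"
proof -
  have "((\<lambda>z. a * fd F z e) has_derivative (\<lambda>h. a * fd (\<lambda>z. fd F z e) x h)) (at x)"
    by (intro has_derivative_mult_right has_derivative_fd d2F)
  then have "((\<lambda>z. fd F z (a *\<^sub>R e)) has_derivative (\<lambda>h. a * fd (\<lambda>z. fd F z e) x h)) (at x)"
    by (rule has_derivative_transform_within_open[OF _ V])
      (use linear_frechet_derivative[OF dF] in \<open>simp add: linear_scale\<close>)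
  then have "dirderiv2 F (a *\<^sub>R e) (b *\<^sub>R e') x = a * fd (\<lambda>z. fd F z e) x (b *\<^sub>R e')"
    unfolding dirderiv2_def by (simp add: fd_eq)
  also have "\<dots> = a * b * dirderiv2 F e e' x"
    using linear_frechet_derivative[OF d2F] by (simp add: linear_scale dirderiv2_def)
  finally show ?thesis .
qed

lemma has_derivative_fd_compose:
  fixes F :: "'a::euclidean_space \<Rightarrow> real" and \<phi> :: "'b::euclidean_space \<Rightarrow> 'a"
  assumes V: "open V" "\<phi> q \<in> V" and dF: "\<And>x. x \<in> V \<Longrightarrow> F differentiable at x"
    and d2F: "\<And>a. (\<lambda>x. fd F x a) differentiable at (\<phi> q)"
    and Q: "open Q" "q \<in> Q" and d\<phi>: "\<And>y. y \<in> Q \<Longrightarrow> \<phi> differentiable at y"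
    and d2\<phi>: "(\<lambda>y. fd \<phi> y u) differentiable at q"
  shows "((\<lambda>y. fd (\<lambda>x. F (\<phi> x)) y u) has_derivative
    (\<lambda>u'. dirderiv2 F (fd \<phi> q u) (fd \<phi> q u') (\<phi> q) + fd F (\<phi> q) (dirderiv2 \<phi> u u' q))) (at q)"
proof -
  have "continuous_on Q \<phi>"
    using d\<phi> by (meson continuous_at_imp_continuous_on differentiable_imp_continuous_within)
  then have Q': "open (Q \<inter> \<phi> -` V)" "q \<in> Q \<inter> \<phi> -` V"
    using continuous_open_preimage[OF _ Q(1) V(1)] Q V by auto
  define c where "c = (\<lambda>y. fd \<phi> y u)"
  have chain: "(\<Sum>i\<in>Basis. (c y \<bullet> i) * fd F (\<phi> y) i) = fd (\<lambda>x. F (\<phi> x)) y u"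
    if "y \<in> Q \<inter> \<phi> -` V" for y
    using frechet_derivative_compose[of \<phi> y F] fd_euclidean_expansion[OF dF, of "\<phi> y" "c y"] d\<phi> dF that
    by (simp add: c_def o_def)
  have dc: "((\<lambda>y. c y \<bullet> i) has_derivative (\<lambda>h. fd c q h \<bullet> i)) (at q)" for i
    unfolding c_def by (rule bounded_linear.has_derivative[OF bounded_linear_inner_left has_derivative_fd[OF d2\<phi>]])
  have dFi: "((\<lambda>y. fd F (\<phi> y) i) has_derivative (\<lambda>h. fd (\<lambda>x. fd F x i) (\<phi> q) (fd \<phi> q h))) (at q)" for i
    using diff_chain_at[OF has_derivative_fd[OF d\<phi>[OF Q(2)]] has_derivative_fd[OF d2F[of i]]]
    by (simp add: o_def)
  have "((\<lambda>y. \<Sum>i\<in>Basis. (c y \<bullet> i) * fd F (\<phi> y) i) has_derivative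
      (\<lambda>h. \<Sum>i\<in>Basis. (c q \<bullet> i) * fd (\<lambda>x. fd F x i) (\<phi> q) (fd \<phi> q h) + (fd c q h \<bullet> i) * fd F (\<phi> q) i))
      (at q)"
    by (intro has_derivative_sum has_derivative_mult dc dFi)
  moreover have "(\<Sum>i\<in>Basis. (c q \<bullet> i) * fd (\<lambda>x. fd F x i) (\<phi> q) (fd \<phi> q h) + (fd c q h \<bullet> i) * fd F (\<phi> q) i)
      = dirderiv2 F (fd \<phi> q u) (fd \<phi> q h) (\<phi> q) + fd F (\<phi> q) (dirderiv2 \<phi> u h q)" for h
  proof -
    have "dirderiv2 F (c q) (fd \<phi> q h) (\<phi> q) = (\<Sum>i\<in>Basis. (c q \<bullet> i) * fd (\<lambda>x. fd F x i) (\<phi> q) (fd \<phi> q h))"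
      by (rule dirderiv2_euclidean_expansion[OF V dF d2F])
    moreover have "fd F (\<phi> q) (fd c q h) = (\<Sum>i\<in>Basis. (fd c q h \<bullet> i) * fd F (\<phi> q) i)"
      using fd_euclidean_expansion[OF dF[OF V(2)], of "fd c q h"] by simp
    ultimately show ?thesis by (simp add: sum.distrib c_def dirderiv2_def)
  qed
  ultimately show ?thesis
    using has_derivative_transform_within_open[OF _ Q' chain] by simp
qed

lemma has_derivative_fd_chart_pullback:
  fixes G :: "'a::euclidean_space \<Rightarrow> real"
  assumes c: "submanifold_chart S p W \<Psi> L" and G: "smooth_on U G" and p: "p \<in> U"
  shows "((\<lambda>y. fd (G \<circ> inv_into W \<Psi>) y (fd \<Psi> p v)) has_derivative
    (\<lambda>u. dirderiv2 G v (fd (inv_into W \<Psi>) (\<Psi> p) u) p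
      + fd G p (dirderiv2 (inv_into W \<Psi>) (fd \<Psi> p v) u (\<Psi> p)))) (at (\<Psi> p))"
proof -
  note c' = submanifold_chartD[OF c]
  have U: "open U" using G by (simp add: smooth_on_def)
  have \<phi>: "inv_into W \<Psi> (\<Psi> p) = p" "fd (inv_into W \<Psi>) (\<Psi> p) (fd \<Psi> p v) = v"
    using inv_into_f_f[OF c'(3,2)] submanifold_chart_inv_derivative[OF c] by auto
  have "((\<lambda>y. fd (\<lambda>x. G (inv_into W \<Psi> x)) y (fd \<Psi> p v)) has_derivative
    (\<lambda>u. dirderiv2 G (fd (inv_into W \<Psi>) (\<Psi> p) (fd \<Psi> p v)) (fd (inv_into W \<Psi>) (\<Psi> p) u)
        (inv_into W \<Psi> (\<Psi> p))
      + fd G (inv_into W \<Psi> (\<Psi> p)) (dirderiv2 (inv_into W \<Psi>) (fd \<Psi> p v) u (\<Psi> p)))) (at (\<Psi> p))"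
    by (rule has_derivative_fd_compose[OF U _ _ _ c'(4)])
      (use smooth_on_imp_differentiable[OF G] smooth_on_imp_differentiable[OF smooth_on_fd[OF G]]
        smooth_on_imp_differentiable[OF c'(6)] smooth_on_imp_differentiable[OF smooth_on_fd[OF c'(6)]]
        \<phi> p c'(2) in auto)
  then show ?thesis using \<phi> by (simp add: o_def)
qed

text \<open>The second derivative of the inverse chart enters the Hessians of
  \<open>F\<close> and \<open>H\<close> through the same term; it is eliminated because \<open>H\<close> pulled back to the chart
  vanishes on \<open>L\<close>, so its Hessian there is zero.\<close>

lemma submanifold_chart_hessian_lagrange:
  fixes H F :: "'a::euclidean_space \<Rightarrow> real"
  assumes c: "submanifold_chart M p W \<Psi> L" and p: "p \<in> M" "p \<in> U"
    and H: "smooth_on U H" and F: "smooth_on U F" and zH: "\<And>x. x \<in> M \<Longrightarrow> x \<in> U \<Longrightarrow> H x = 0"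
    and lagrange: "\<And>a. fd F p a = l * fd H p a"
    and v: "fd \<Psi> p v \<in> L" and w: "fd \<Psi> p w \<in> L"
  shows "dirderiv2 (F \<circ> inv_into W \<Psi>) (fd \<Psi> p v) (fd \<Psi> p w) (\<Psi> p)
    = dirderiv2 F v w p - l * dirderiv2 H v w p"
proof -
  note c' = submanifold_chartD[OF c]
  have U: "open U" using H by (simp add: smooth_on_def)
  define \<phi> where "\<phi> = inv_into W \<Psi>"
  define \<phi>'' where "\<phi>'' = dirderiv2 \<phi> (fd \<Psi> p v) (fd \<Psi> p w) (\<Psi> p)"
  have \<phi>w: "fd \<phi> (\<Psi> p) (fd \<Psi> p w) = w"
    using submanifold_chart_inv_derivative[OF c] by (simp add: \<phi>_def)
  have second: "dirderiv2 (G \<circ> \<phi>) (fd \<Psi> p v) (fd \<Psi> p w) (\<Psi> p) = dirderiv2 G v w p + fd G p \<phi>''"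
    if "smooth_on U G" for G :: "'a \<Rightarrow> real"
    using fd_eq[OF has_derivative_fd_chart_pullback[OF c that p(2), of v]] \<phi>w
    by (simp add: dirderiv2_def[of "G \<circ> inv_into W \<Psi>"] \<phi>_def \<phi>''_def)
  have "\<exists>B. open B \<and> \<Psi> p \<in> B \<and> B \<subseteq> \<Psi> ` W \<and> \<phi> ` B \<subseteq> U \<and> (\<forall>y\<in>L. y \<in> B \<longrightarrow> H (\<phi> y) = 0)"
    by (rule submanifold_chart_pullback_vanishing[OF c U p(2) zH]) (auto simp: \<phi>_def)
  then obtain B where B: "open B" "\<Psi> p \<in> B" "B \<subseteq> \<Psi> ` W" "\<phi> ` B \<subseteq> U"
    and HB: "\<And>y. y \<in> L \<Longrightarrow> y \<in> B \<Longrightarrow> (H \<circ> \<phi>) y = 0"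
    by auto
  have "dirderiv2 (H \<circ> \<phi>) (fd \<Psi> p v) (fd \<Psi> p w) (\<Psi> p) = 0"
  proof (rule dirderiv2_zero_along_subspace[OF c'(7) B(1,2) submanifold_chart_image_mem[OF c p(1)]
        _ _ HB v w])
    show "(H \<circ> \<phi>) differentiable at y" if "y \<in> B" for y
    proof (rule differentiable_chain_at)
      show "\<phi> differentiable at y"
        using that B(3) smooth_on_imp_differentiable[OF c'(6)] by (auto simp: \<phi>_def)
      show "H differentiable at (\<phi> y)"
        using that B(4) smooth_on_imp_differentiable[OF H] by auto
    qed
    show "(\<lambda>y. fd (H \<circ> \<phi>) y (fd \<Psi> p v)) differentiable at (\<Psi> p)"
      using has_derivative_fd_chart_pullback[OF c H p(2)] by (auto simp: \<phi>_def differentiable_def)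
  qed
  then have "l * dirderiv2 H v w p + l * fd H p \<phi>'' = 0"
    using second[OF H] by (simp flip: distrib_left)
  then show ?thesis
    using second[OF F] lagrange by (simp add: \<phi>_def algebra_simps)
qed

lemma submanifold_chart_replace_coord:
  fixes H :: "'a::euclidean_space \<Rightarrow> real"
  assumes H: "smooth_on U H" and p: "p \<in> U" and e: "e \<in> Basis" "fd H p e \<noteq> 0"
    and J: "J \<subseteq> Basis" "e \<notin> J"
    and S: "\<And>x. x \<in> U \<Longrightarrow> x \<in> S \<longleftrightarrow> H x = 0 \<and> (\<forall>j\<in>J. x \<bullet> j = 0)"
  obtains W \<Psi> L where "submanifold_chart S p W \<Psi> L"
    "\<And>v. fd H p v = 0 \<Longrightarrow> \<forall>j\<in>J. v \<bullet> j = 0 \<Longrightarrow> fd \<Psi> p v \<in> L"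
proof -
  define \<Psi> where "\<Psi> = replace_coord e H"
  obtain W where W: "open W" "p \<in> W" "W \<subseteq> U" "inj_on \<Psi> W" "open (\<Psi> ` W)" "smooth_on W \<Psi>"
    "smooth_on (\<Psi> ` W) (inv_into W \<Psi>)"
    using replace_coord_local_diffeo[OF H p e] unfolding \<Psi>_def by blast
  define L where "L = {y. y \<bullet> e = 0 \<and> (\<forall>j\<in>J. y \<bullet> j = 0)}"
  have sL: "subspace L" unfolding L_def subspace_def by (auto simp: inner_add_left)
  have J': "\<And>j. j \<in> J \<Longrightarrow> j \<in> Basis \<and> j \<noteq> e" using J by auto
  have mem_L: "\<Psi> x \<in> L \<longleftrightarrow> H x = 0 \<and> (\<forall>j\<in>J. x \<bullet> j = 0)" for x
    using replace_coord_inner_Basis[OF e(1)] J' by (simp add: L_def \<Psi>_def)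
  have "\<Psi> ` (S \<inter> W) = L \<inter> \<Psi> ` W"
  proof (intro equalityI subsetI)
    fix y assume "y \<in> \<Psi> ` (S \<inter> W)"
    then obtain x where "x \<in> S" "x \<in> W" "y = \<Psi> x" by auto
    then show "y \<in> L \<inter> \<Psi> ` W" using S[of x] mem_L[of x] W(3) by auto
  next
    fix y assume "y \<in> L \<inter> \<Psi> ` W"
    then obtain x where "x \<in> W" "y = \<Psi> x" "\<Psi> x \<in> L" by auto
    then show "y \<in> \<Psi> ` (S \<inter> W)" using S[of x] mem_L[of x] W(3) by auto
  qed
  then have "submanifold_chart S p W \<Psi> L"
    unfolding submanifold_chart_def using W sL by auto
  moreover have "fd \<Psi> p v \<in> L" if "fd H p v = 0" "\<forall>j\<in>J. v \<bullet> j = 0" for v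
  proof -
    have "fd \<Psi> p = replace_coord e (fd H p)"
      using fd_eq[OF has_derivative_replace_coord[OF has_derivative_fd]]
        smooth_on_imp_differentiable[OF H p] by (simp add: \<Psi>_def)
    then show ?thesis
      using replace_coord_inner_Basis[OF e(1)] J' that by (simp add: L_def)
  qed
  ultimately show ?thesis by (rule that)
qed

lemma tangent_space_level_set:
  fixes H :: "'a::euclidean_space \<Rightarrow> real"
  assumes H: "smooth_on U H" and p: "p \<in> U" "p \<in> S" and e: "e \<in> Basis" "fd H p e \<noteq> 0"
    and J: "J \<subseteq> Basis" "e \<notin> J"
    and S: "\<And>x. x \<in> U \<Longrightarrow> x \<in> S \<longleftrightarrow> H x = 0 \<and> (\<forall>j\<in>J. x \<bullet> j = 0)"
  shows "tangent_space S p = {v. fd H p v = 0 \<and> (\<forall>j\<in>J. v \<bullet> j = 0)}"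
proof
  have U: "open U" using H by (simp add: smooth_on_def)
  show "tangent_space S p \<subseteq> {v. fd H p v = 0 \<and> (\<forall>j\<in>J. v \<bullet> j = 0)}"
  proof (intro subsetI CollectI conjI ballI)
    fix v assume v: "v \<in> tangent_space S p"
    show "fd H p v = 0"
      by (rule tangent_space_fd_vanishing[OF p(2) U p(1) smooth_on_imp_differentiable[OF H p(1)] _ v])
        (use S in blast)
    fix j assume "j \<in> J"
    have "fd (\<lambda>x. x \<bullet> j) p v = 0"
      by (rule tangent_space_fd_vanishing[OF p(2) U p(1) _ _ v])
        (use S \<open>j \<in> J\<close> in \<open>auto simp: bounded_linear_imp_differentiable bounded_linear_inner_left\<close>)
    then show "v \<bullet> j = 0" by (simp add: fd_bounded_linear bounded_linear_inner_left)
  qed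
  show "{v. fd H p v = 0 \<and> (\<forall>j\<in>J. v \<bullet> j = 0)} \<subseteq> tangent_space S p"
    by (rule submanifold_chart_replace_coord[OF H p(1) e J S]) (auto intro: tangent_spaceI)
qed

section \<open>The model in \<open>\<real>\<^sup>4\<close>\<close>

type_synonym real4 = "real \<times> real \<times> real \<times> real"

text \<open>Functions on \<^typ>\<open>real4\<close> are defined through \<^const>\<open>fst\<close> and \<^const>\<open>snd\<close>, so that
  \<open>derivative_eq_intros\<close> applies to them; the \<open>simp\<close> rules below give their form on tuples.\<close>

definition rho_t :: "real4 \<Rightarrow> real \<times> real" where
  "rho_t p = ((fst p)\<^sup>2 + (fst (snd p))\<^sup>2 + (fst (snd (snd p)))\<^sup>2, snd (snd (snd p)))"

definition rho_t_deriv :: "real4 \<Rightarrow> real4 \<Rightarrow> real \<times> real" where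
  "rho_t_deriv p v =
     (2 * (fst p * fst v + fst (snd p) * fst (snd v) + fst (snd (snd p)) * fst (snd (snd v))),
      snd (snd (snd v)))"

definition sq_xy :: "real4 \<Rightarrow> real" where
  "sq_xy p = (fst p)\<^sup>2 + (fst (snd p))\<^sup>2"

definition off_t_axis :: "real4 set" where
  "off_t_axis = {p. 0 < (fst p)\<^sup>2 + (fst (snd p))\<^sup>2 + (fst (snd (snd p)))\<^sup>2}"

lemma rho_t_simp [simp]: "rho_t (x, y, z, t) = (x\<^sup>2 + y\<^sup>2 + z\<^sup>2, t)"
  by (simp add: rho_t_def)

lemma rho_t_deriv_simp [simp]:
  "rho_t_deriv (x, y, z, t) (a, b, c, d) = (2 * (x * a + y * b + z * c), d)"
  by (simp add: rho_t_deriv_def)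

lemma sq_xy_simp [simp]: "sq_xy (x, y, z, t) = x\<^sup>2 + y\<^sup>2"
  by (simp add: sq_xy_def)

lemma mem_off_t_axis [simp]: "(x, y, z, t) \<in> off_t_axis \<longleftrightarrow> 0 < x\<^sup>2 + y\<^sup>2 + z\<^sup>2"
  by (simp add: off_t_axis_def)

lemma Basis_real4:
  "((1, 0, 0, 0) :: real4) \<in> Basis" "((0, 1, 0, 0) :: real4) \<in> Basis"
  "((0, 0, 1, 0) :: real4) \<in> Basis" "((0, 0, 0, 1) :: real4) \<in> Basis"
  by (auto simp: Basis_prod_def zero_prod_def)

lemma inner_Basis_real4 [simp]:
  fixes x y z t :: real
  shows "(x, y, z, t) \<bullet> (1, 0, 0, 0) = x" "(x, y, z, t) \<bullet> (0, 1, 0, 0) = y"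
    "(x, y, z, t) \<bullet> (0, 0, 1, 0) = z" "(x, y, z, t) \<bullet> (0, 0, 0, 1) = t"
  by (simp_all add: inner_prod_def)

lemma has_derivative_rho_t: "(rho_t has_derivative rho_t_deriv p) (at p)"
  unfolding rho_t_def rho_t_deriv_def[abs_def]
  by (auto intro!: derivative_eq_intros simp: algebra_simps)

lemma has_derivative_rho_t_deriv:
  "((\<lambda>p. rho_t_deriv p v) has_derivative (\<lambda>w. (fst (rho_t_deriv w v), 0))) (at p)"
  unfolding rho_t_deriv_def by (auto intro!: derivative_eq_intros simp: algebra_simps)

lemma has_derivative_sq_xy:
  "(sq_xy has_derivative (\<lambda>v. 2 * (fst p * fst v + fst (snd p) * fst (snd v)))) (at p)"
  unfolding sq_xy_def by (auto intro!: derivative_eq_intros simp: algebra_simps)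

lemma fd_sq_xy: "fd sq_xy (x, y, z, t) (a, b, c, d) = 2 * (x * a + y * b)"
  by (simp add: fd_eq[OF has_derivative_sq_xy])

lemma dirderiv2_sq_xy: "dirderiv2 sq_xy (a, b, c, d) (a', b', c', d') p = 2 * (a * a' + b * b')"
proof -
  have "((\<lambda>p. fd sq_xy p (a, b, c, d)) has_derivative (\<lambda>w. 2 * (fst w * a + fst (snd w) * b))) (at p)"
    by (simp add: fd_eq[OF has_derivative_sq_xy]) (auto intro!: derivative_eq_intros simp: algebra_simps)
  then show ?thesis by (simp add: dirderiv2_def fd_eq)
qed

lemma bounded_linear_real4_coords:
  "bounded_linear (\<lambda>p::real4. fst p)" "bounded_linear (\<lambda>p::real4. fst (snd p))"
  "bounded_linear (\<lambda>p::real4. fst (snd (snd p)))" "bounded_linear (\<lambda>p::real4. snd (snd (snd p)))"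
  by (intro bounded_linear_fst_comp bounded_linear_snd_comp bounded_linear_ident)+

lemma smooth_on_rho_t: "smooth_on UNIV rho_t"
  unfolding rho_t_def[abs_def] power2_eq_square
  by (intro smooth_on_Pair smooth_on_add smooth_on_mult
      smooth_on_bounded_linear[OF open_UNIV bounded_linear_real4_coords(1)]
      smooth_on_bounded_linear[OF open_UNIV bounded_linear_real4_coords(2)]
      smooth_on_bounded_linear[OF open_UNIV bounded_linear_real4_coords(3)]
      smooth_on_bounded_linear[OF open_UNIV bounded_linear_real4_coords(4)])

lemma smooth_on_sq_xy: "smooth_on UNIV sq_xy"
  unfolding sq_xy_def[abs_def] power2_eq_square
  by (intro smooth_on_add smooth_on_mult
      smooth_on_bounded_linear[OF open_UNIV bounded_linear_real4_coords(1)]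
      smooth_on_bounded_linear[OF open_UNIV bounded_linear_real4_coords(2)])

lemma open_sq_xy_less: "open {p. sq_xy p < c}"
  and open_sq_xy_greater: "open {p. c < sq_xy p}"
  and open_off_t_axis: "open off_t_axis"
  unfolding sq_xy_def off_t_axis_def
  by (intro open_Collect_less continuous_intros)+

locale contact_sum_profile =
  fixes h :: "real \<times> real \<Rightarrow> real" and \<rho>\<^sub>0 :: real
  assumes smooth: "smooth_on ({0<..} \<times> UNIV) h"
    and regular: "\<And>\<rho> t. \<rho> > 0 \<Longrightarrow> h (\<rho>, t) = 0 \<Longrightarrow>
      (dirderiv h (1, 0) (\<rho>, t), dirderiv h (0, 1) (\<rho>, t)) \<noteq> (0, 0)"
    and rho0_pos: "\<rho>\<^sub>0 > 0"
    and rho0_unique: "{\<rho>. \<rho> > 0 \<and> h (\<rho>, 0) = 0} = {\<rho>\<^sub>0}"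
    and ht_zero: "{(\<rho>, t). \<rho> > 0 \<and> h (\<rho>, t) = 0 \<and> dirderiv h (0, 1) (\<rho>, t) = 0} = {(\<rho>\<^sub>0, 0)}"
    and transv: "\<And>\<rho> t. \<rho> > 0 \<Longrightarrow> h (\<rho>, t) = 0 \<Longrightarrow>
      \<rho> * dirderiv h (1, 0) (\<rho>, t) - t * dirderiv h (0, 1) (\<rho>, t) > 0"
    and htt: "dirderiv2 h (0, 1) (0, 1) (\<rho>\<^sub>0, 0) < 0"
begin

abbreviation "h\<^sub>\<rho> \<equiv> dirderiv h (1, 0)"
abbreviation "h\<^sub>t \<equiv> dirderiv h (0, 1)"

definition H :: "real4 \<Rightarrow> real" where
  "H p = h (rho_t p)"

definition M :: "real4 set" where
  "M = {p. case p of (x, y, z, t) \<Rightarrow> x\<^sup>2 + y\<^sup>2 + z\<^sup>2 > 0 \<and> h (x\<^sup>2 + y\<^sup>2 + z\<^sup>2, t) = 0}"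

lemma mem_M [simp]: "(x, y, z, t) \<in> M \<longleftrightarrow> 0 < x\<^sup>2 + y\<^sup>2 + z\<^sup>2 \<and> h (x\<^sup>2 + y\<^sup>2 + z\<^sup>2, t) = 0"
  by (simp add: M_def)

lemma mem_M_iff: "p \<in> M \<longleftrightarrow> p \<in> off_t_axis \<and> H p = 0"
  by (cases p) (simp add: H_def)

lemma rho_t_off_t_axis: "p \<in> off_t_axis \<Longrightarrow> rho_t p \<in> {0<..} \<times> UNIV"
  by (cases p) auto

lemma differentiable_h: "x \<in> {0<..} \<times> UNIV \<Longrightarrow> h differentiable at x"
  using smooth_on_imp_differentiable[OF smooth] .

lemma fd_h: "x \<in> {0<..} \<times> UNIV \<Longrightarrow> fd h x (a, b) = a * h\<^sub>\<rho> x + b * h\<^sub>t x"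
  using linear_euclidean_expansion[OF linear_frechet_derivative[OF differentiable_h], of x "(a, b)"]
  by (simp add: Basis_prod_def dirderiv_def inner_prod_def)

lemma smooth_on_H: "smooth_on off_t_axis H"
  unfolding H_def[abs_def]
  by (rule smooth_on_compose[OF smooth_on_subset[OF smooth_on_rho_t open_off_t_axis] _ smooth])
    (auto dest: rho_t_off_t_axis)

lemma fd_H:
  assumes "(x, y, z, t) \<in> off_t_axis"
  shows "fd H (x, y, z, t) (a, b, c, d) =
    2 * (x * a + y * b + z * c) * h\<^sub>\<rho> (x\<^sup>2 + y\<^sup>2 + z\<^sup>2, t) + d * h\<^sub>t (x\<^sup>2 + y\<^sup>2 + z\<^sup>2, t)"
proof -
  have "rho_t differentiable at (x, y, z, t)"
    using has_derivative_rho_t unfolding differentiable_def by blast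
  then have "fd (h \<circ> rho_t) (x, y, z, t) = fd h (rho_t (x, y, z, t)) \<circ> rho_t_deriv (x, y, z, t)"
    using frechet_derivative_compose differentiable_h[OF rho_t_off_t_axis[OF assms]]
      fd_eq[OF has_derivative_rho_t] by metis
  moreover have "h \<circ> rho_t = H" by (simp add: H_def[abs_def] o_def)
  ultimately show ?thesis
    using fd_h[OF rho_t_off_t_axis[OF assms]] by (simp add: algebra_simps)
qed

lemma h_rho0: "h (\<rho>\<^sub>0, 0) = 0"
  using rho0_unique by blast

lemma ht_rho0: "h\<^sub>t (\<rho>\<^sub>0, 0) = 0"
  using ht_zero by blast

lemma hrho_rho0_pos: "h\<^sub>\<rho> (\<rho>\<^sub>0, 0) > 0"
  using transv[OF rho0_pos h_rho0] rho0_pos by (simp add: zero_less_mult_iff)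

lemma ht_eq_zero_imp: "\<rho> > 0 \<Longrightarrow> h (\<rho>, t) = 0 \<Longrightarrow> h\<^sub>t (\<rho>, t) = 0 \<Longrightarrow> \<rho> = \<rho>\<^sub>0 \<and> t = 0"
  using ht_zero by blast

lemma regular_direction_z:
  assumes p: "(x, y, z, t) \<in> M" and z: "z \<noteq> 0"
  obtains e where "e \<in> {(0, 0, 1, 0), (0, 0, 0, 1)}" "fd H (x, y, z, t) e \<noteq> 0"
proof -
  have "h\<^sub>\<rho> (x\<^sup>2 + y\<^sup>2 + z\<^sup>2, t) \<noteq> 0 \<or> h\<^sub>t (x\<^sup>2 + y\<^sup>2 + z\<^sup>2, t) \<noteq> 0"
    using regular p by simp
  moreover have "fd H (x, y, z, t) (0, 0, 1, 0) = 2 * z * h\<^sub>\<rho> (x\<^sup>2 + y\<^sup>2 + z\<^sup>2, t)"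
    and "fd H (x, y, z, t) (0, 0, 0, 1) = h\<^sub>t (x\<^sup>2 + y\<^sup>2 + z\<^sup>2, t)"
    using fd_H p by simp_all
  ultimately show ?thesis
    using that z by (metis insertI1 insertI2 mult_eq_0_iff zero_neq_numeral)
qed

lemma regular_direction:
  assumes p: "(x, y, z, t) \<in> M"
  obtains e where "e \<in> Basis" "fd H (x, y, z, t) e \<noteq> 0"
proof (cases "z = 0")
  case True
  have "h\<^sub>\<rho> (x\<^sup>2 + y\<^sup>2, t) \<noteq> 0 \<or> h\<^sub>t (x\<^sup>2 + y\<^sup>2, t) \<noteq> 0" "x \<noteq> 0 \<or> y \<noteq> 0"
    using regular p True by auto
  moreover have "fd H (x, y, z, t) (1, 0, 0, 0) = 2 * x * h\<^sub>\<rho> (x\<^sup>2 + y\<^sup>2, t)"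
    and "fd H (x, y, z, t) (0, 1, 0, 0) = 2 * y * h\<^sub>\<rho> (x\<^sup>2 + y\<^sup>2, t)"
    and "fd H (x, y, z, t) (0, 0, 0, 1) = h\<^sub>t (x\<^sup>2 + y\<^sup>2, t)"
    using fd_H p True by simp_all
  ultimately show ?thesis
    using that Basis_real4 by (metis mult_eq_0_iff zero_neq_numeral)
next
  case False
  then show ?thesis
    using regular_direction_z[OF p] Basis_real4 that by blast
qed

lemma tangent_space_M: "p \<in> M \<Longrightarrow> tangent_space M p = {v. fd H p v = 0}"
proof -
  assume p: "p \<in> M"
  obtain x y z t where xyzt: "p = (x, y, z, t)" by (cases p)
  obtain e where "e \<in> Basis" "fd H p e \<noteq> 0"
    using regular_direction p unfolding xyzt by blast
  then show ?thesis
    using tangent_space_level_set[OF smooth_on_H _ p, of e "{}"] p mem_M_iff by auto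
qed

lemma embedded_submanifold_M: "embedded_submanifold M"
  unfolding embedded_submanifold_def
proof
  fix p assume p: "p \<in> M"
  obtain x y z t where xyzt: "p = (x, y, z, t)" by (cases p)
  obtain e where "e \<in> Basis" "fd H p e \<noteq> 0"
    using regular_direction p unfolding xyzt by blast
  then show "\<exists>W \<Psi> L. submanifold_chart M p W \<Psi> L"
    using submanifold_chart_replace_coord[OF smooth_on_H _ _ _ empty_subsetI, of p e M] p mem_M_iff
    by (metis empty_iff)
qed

lemma dirderiv2_H:
  assumes p: "p \<in> off_t_axis"
  shows "dirderiv2 H v w p =
    dirderiv2 h (rho_t_deriv p v) (rho_t_deriv p w) (rho_t p) + fd h (rho_t p) (fst (rho_t_deriv w v), 0)"
proof -
  have D: "open ({0<..} \<times> UNIV :: (real \<times> real) set)" "rho_t p \<in> {0<..} \<times> UNIV"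
    using smooth rho_t_off_t_axis[OF p] by (auto simp: smooth_on_def)
  have d2h: "(\<lambda>x. fd h x a) differentiable at (rho_t p)" for a
    using smooth_on_imp_differentiable[OF smooth_on_fd[OF smooth] D(2)] .
  have "rho_t differentiable at y" for y
    using has_derivative_rho_t unfolding differentiable_def by blast
  moreover have "fd rho_t y = rho_t_deriv y" for y
    using fd_eq[OF has_derivative_rho_t] .
  moreover have "(\<lambda>y. rho_t_deriv y v) differentiable at p"
    using has_derivative_rho_t_deriv unfolding differentiable_def by blast
  ultimately have "((\<lambda>y. fd (\<lambda>x. h (rho_t x)) y v) has_derivative
      (\<lambda>w. dirderiv2 h (rho_t_deriv p v) (rho_t_deriv p w) (rho_t p) + fd h (rho_t p) (dirderiv2 rho_t v w p)))
      (at p)"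
    using has_derivative_fd_compose[where F = h and \<phi> = rho_t and q = p and u = v,
        OF D differentiable_h d2h open_UNIV UNIV_I]
    by simp
  moreover have "dirderiv2 rho_t v w p = (fst (rho_t_deriv w v), 0)"
    using fd_eq[OF has_derivative_rho_t_deriv] by (simp add: dirderiv2_def fd_eq[OF has_derivative_rho_t])
  ultimately have "fd (\<lambda>y. fd (\<lambda>x. h (rho_t x)) y v) p w =
      dirderiv2 h (rho_t_deriv p v) (rho_t_deriv p w) (rho_t p) + fd h (rho_t p) (fst (rho_t_deriv w v), 0)"
    by (simp add: fd_eq)
  then show ?thesis by (simp add: dirderiv2_def H_def[abs_def])
qed

definition crit_axis :: "real4 set" where
  "crit_axis = {p \<in> M. fst p = 0 \<and> fst (snd p) = 0}"

definition crit_circle :: "real4 set" where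
  "crit_circle = {p. sq_xy p = \<rho>\<^sub>0 \<and> fst (snd (snd p)) = 0 \<and> snd (snd (snd p)) = 0}"

lemma mem_crit_axis [simp]: "(x, y, z, t) \<in> crit_axis \<longleftrightarrow> x = 0 \<and> y = 0 \<and> (x, y, z, t) \<in> M"
  by (auto simp: crit_axis_def simp del: mem_M)

lemma mem_crit_circle [simp]: "(x, y, z, t) \<in> crit_circle \<longleftrightarrow> x\<^sup>2 + y\<^sup>2 = \<rho>\<^sub>0 \<and> z = 0 \<and> t = 0"
  by (simp add: crit_circle_def)

lemma crit_circle_subset_M: "crit_circle \<subseteq> M"
  using rho0_pos h_rho0 by (auto simp: crit_circle_def sq_xy_def)

lemma tangent_crit_circle_M:
  assumes p: "(x, y, 0, 0) \<in> crit_circle" and v: "(a, b, c, d) \<in> tangent_space M (x, y, 0, 0)"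
  shows "x * a + y * b = 0"
proof -
  have "(x, y, 0, 0) \<in> M" using p crit_circle_subset_M by blast
  then have "2 * (x * a + y * b) * h\<^sub>\<rho> (\<rho>\<^sub>0, 0) = 0"
    using v tangent_space_M fd_H[of x y 0 0 a b c d] p ht_rho0 by simp
  then show ?thesis using hrho_rho0_pos by simp
qed

lemma crit_set_sq_xy_subset: "crit_set sq_xy M \<subseteq> crit_axis \<union> crit_circle"
proof
  fix p assume p: "p \<in> crit_set sq_xy M"
  then have pM: "p \<in> M" and crit: "\<And>v. fd H p v = 0 \<Longrightarrow> fd sq_xy p v = 0"
    unfolding crit_set_def using tangent_space_M by auto
  obtain x y z t where xyzt: "p = (x, y, z, t)" by (cases p)
  have pU: "(x, y, z, t) \<in> off_t_axis" and h0: "h (x\<^sup>2 + y\<^sup>2 + z\<^sup>2, t) = 0"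
    using pM xyzt by auto
  define R T where "R = h\<^sub>\<rho> (x\<^sup>2 + y\<^sup>2 + z\<^sup>2, t)" and "T = h\<^sub>t (x\<^sup>2 + y\<^sup>2 + z\<^sup>2, t)"
  show "p \<in> crit_axis \<union> crit_circle"
  proof (cases "x = 0 \<and> y = 0")
    case True
    then show ?thesis using pM xyzt by simp
  next
    case False
    define s where "s = x\<^sup>2 + y\<^sup>2"
    have s: "s > 0" using False unfolding s_def by (simp add: sum_power2_gt_zero_iff)
    txt \<open>Two tangent vectors of \<open>M\<close> on which \<open>d(x\<^sup>2 + y\<^sup>2)\<close> is \<open>2 T s\<close> and \<open>2 z s\<close>.\<close>
    have "fd H p (T * x, T * y, 0, - 2 * R * s) = 0" "fd H p (z * x, z * y, - s, 0) = 0"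
      unfolding xyzt fd_H[OF pU] R_def[symmetric] T_def[symmetric] s_def
      by (simp_all add: algebra_simps power2_eq_square)
    then have "fd sq_xy p (T * x, T * y, 0, - 2 * R * s) = 0" "fd sq_xy p (z * x, z * y, - s, 0) = 0"
      by (simp_all add: crit)
    then have "2 * T * s = 0" "2 * z * s = 0"
      unfolding xyzt fd_sq_xy s_def by (simp_all add: algebra_simps power2_eq_square)
    then have "T = 0" "z = 0" using s by simp_all
    then have "x\<^sup>2 + y\<^sup>2 + z\<^sup>2 = \<rho>\<^sub>0 \<and> t = 0"
      using ht_eq_zero_imp pU h0 by (simp add: T_def)
    then show ?thesis using xyzt \<open>z = 0\<close> by simp
  qed
qed

lemma crit_axis_circle_subset: "crit_axis \<union> crit_circle \<subseteq> crit_set sq_xy M"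
proof
  fix p assume "p \<in> crit_axis \<union> crit_circle"
  moreover obtain x y z t where xyzt: "p = (x, y, z, t)" by (cases p)
  ultimately consider "x = 0" "y = 0" "p \<in> M" | "(x, y, 0, 0) \<in> crit_circle" "z = 0" "t = 0"
    by auto
  then show "p \<in> crit_set sq_xy M"
  proof cases
    case 1
    then show ?thesis unfolding crit_set_def using xyzt by (auto simp: fd_eq[OF has_derivative_sq_xy])
  next
    case 2
    have pM: "p \<in> M" using 2 xyzt crit_circle_subset_M by (auto simp del: mem_crit_circle mem_M)
    have "fd sq_xy p v = 0" if "v \<in> tangent_space M p" for v
    proof -
      obtain a b c d where "v = (a, b, c, d)" by (cases v)
      then show ?thesis using tangent_crit_circle_M[OF 2(1)] that xyzt 2 by (simp add: fd_sq_xy)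
    qed
    then show ?thesis unfolding crit_set_def using pM by auto
  qed
qed

lemma crit_set_sq_xy: "crit_set sq_xy M = crit_axis \<union> crit_circle"
  using crit_set_sq_xy_subset crit_axis_circle_subset by (rule equalityI)

lemma fd_sq_xy_minus: "fd (\<lambda>p. sq_xy p - c) (x, y, z, t) (a, b, c', d) = 2 * (x * a + y * b)"
  using fd_eq[OF has_derivative_diff[OF has_derivative_sq_xy[of "(x, y, z, t)"] has_derivative_const[of c]]]
  by simp

lemma crit_near_axis:
  "p \<in> off_t_axis \<inter> {p. sq_xy p < \<rho>\<^sub>0} \<Longrightarrow>
    p \<in> crit_axis \<union> crit_circle \<longleftrightarrow> H p = 0 \<and> (\<forall>j\<in>{(1, 0, 0, 0), (0, 1, 0, 0)}. p \<bullet> j = 0)"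
  by (cases p) (auto simp: H_def)

lemma crit_near_circle:
  "p \<in> {p. 0 < sq_xy p} \<Longrightarrow>
    p \<in> crit_axis \<union> crit_circle \<longleftrightarrow> sq_xy p - \<rho>\<^sub>0 = 0 \<and> (\<forall>j\<in>{(0, 0, 1, 0), (0, 0, 0, 1)}. p \<bullet> j = 0)"
  by (cases p) auto

lemma crit_axis_chart_data:
  assumes p: "p \<in> crit_axis"
  obtains e where "p \<in> off_t_axis \<inter> {p. sq_xy p < \<rho>\<^sub>0}" "e \<in> Basis" "fd H p e \<noteq> 0"
    "e \<notin> {(1, 0, 0, 0), (0, 1, 0, 0)}"
proof -
  obtain z t where xyzt: "p = (0, 0, z, t)" and pM: "(0, 0, z, t) \<in> M"
    using p by (cases p) auto
  then have "z \<noteq> 0" by simp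
  then obtain e where "e \<in> {(0, 0, 1, 0), (0, 0, 0, 1)}" "fd H p e \<noteq> 0"
    using regular_direction_z[OF pM] xyzt by blast
  then show ?thesis using that Basis_real4 xyzt pM rho0_pos by auto
qed

lemma crit_circle_chart_data:
  assumes p: "p \<in> crit_circle"
  obtains e where "p \<in> {p. 0 < sq_xy p}" "e \<in> Basis" "fd (\<lambda>p. sq_xy p - \<rho>\<^sub>0) p e \<noteq> 0"
    "e \<notin> {(0, 0, 1, 0), (0, 0, 0, 1)}"
proof -
  obtain x y where xyzt: "p = (x, y, 0, 0)" and "x\<^sup>2 + y\<^sup>2 = \<rho>\<^sub>0"
    using p by (cases p) auto
  then have "x \<noteq> 0 \<or> y \<noteq> 0" "0 < sq_xy p" using rho0_pos by auto
  then show ?thesis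
    using that[of "(1, 0, 0, 0)"] that[of "(0, 1, 0, 0)"] Basis_real4 xyzt
    by (auto simp: fd_sq_xy_minus)
qed

lemma embedded_submanifold_crit_set: "embedded_submanifold (crit_set sq_xy M)"
  unfolding embedded_submanifold_def crit_set_sq_xy
proof
  have J: "{(1, 0, 0, 0), (0, 1, 0, 0)} \<subseteq> (Basis :: real4 set)"
    "{(0, 0, 1, 0), (0, 0, 0, 1)} \<subseteq> (Basis :: real4 set)"
    using Basis_real4 by auto
  fix p assume "p \<in> crit_axis \<union> crit_circle"
  then show "\<exists>W \<Psi> L. submanifold_chart (crit_axis \<union> crit_circle) p W \<Psi> L"
  proof
    assume "p \<in> crit_axis"
    then obtain e where "p \<in> off_t_axis \<inter> {p. sq_xy p < \<rho>\<^sub>0}" "e \<in> Basis" "fd H p e \<noteq> 0"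
      "e \<notin> {(1, 0, 0, 0), (0, 1, 0, 0)}"
      by (rule crit_axis_chart_data)
    then show ?thesis
      using submanifold_chart_replace_coord[OF smooth_on_subset[OF smooth_on_H] _ _ _ J(1) _ crit_near_axis]
        open_off_t_axis open_sq_xy_less by (metis Int_lower1 open_Int)
  next
    assume "p \<in> crit_circle"
    then obtain e where "p \<in> {p. 0 < sq_xy p}" "e \<in> Basis" "fd (\<lambda>p. sq_xy p - \<rho>\<^sub>0) p e \<noteq> 0"
      "e \<notin> {(0, 0, 1, 0), (0, 0, 0, 1)}"
      by (rule crit_circle_chart_data)
    then show ?thesis
      using submanifold_chart_replace_coord[OF smooth_on_subset[OF smooth_on_diff[OF smooth_on_sq_xy
          smooth_on_const[OF open_UNIV]]] _ _ _ J(2) _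
          crit_near_circle] open_sq_xy_greater by (metis subset_UNIV)
  qed
qed

lemma tangent_space_crit_axis:
  assumes p: "p \<in> crit_axis"
  shows "tangent_space (crit_axis \<union> crit_circle) p =
    {v. fd H p v = 0 \<and> (\<forall>j\<in>{(1, 0, 0, 0), (0, 1, 0, 0)}. v \<bullet> j = 0)}"
proof -
  obtain e where U: "p \<in> off_t_axis \<inter> {p. sq_xy p < \<rho>\<^sub>0}" and e: "e \<in> Basis" "fd H p e \<noteq> 0"
    "e \<notin> {(1, 0, 0, 0), (0, 1, 0, 0)}"
    using p by (rule crit_axis_chart_data)
  have H: "smooth_on (off_t_axis \<inter> {p. sq_xy p < \<rho>\<^sub>0}) H"
    using smooth_on_subset[OF smooth_on_H] open_off_t_axis open_sq_xy_less by blast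
  show ?thesis
    by (rule tangent_space_level_set[OF H U _ e(1,2) _ e(3) crit_near_axis])
      (use p Basis_real4 in auto)
qed

lemma tangent_space_crit_circle:
  assumes p: "p \<in> crit_circle"
  shows "tangent_space (crit_axis \<union> crit_circle) p =
    {v. fd (\<lambda>p. sq_xy p - \<rho>\<^sub>0) p v = 0 \<and> (\<forall>j\<in>{(0, 0, 1, 0), (0, 0, 0, 1)}. v \<bullet> j = 0)}"
proof -
  obtain e where U: "p \<in> {p. 0 < sq_xy p}" and e: "e \<in> Basis" "fd (\<lambda>p. sq_xy p - \<rho>\<^sub>0) p e \<noteq> 0"
    "e \<notin> {(0, 0, 1, 0), (0, 0, 0, 1)}"
    using p by (rule crit_circle_chart_data)
  have K: "smooth_on {p. 0 < sq_xy p} (\<lambda>p. sq_xy p - \<rho>\<^sub>0)"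
    using smooth_on_subset[OF smooth_on_diff[OF smooth_on_sq_xy smooth_on_const[OF open_UNIV]]]
      open_sq_xy_greater by blast
  show ?thesis
    by (rule tangent_space_level_set[OF K U _ e(1,2) _ e(3) crit_near_circle])
      (use p Basis_real4 in auto)
qed

lemma chart_hessian_sq_xy:
  assumes c: "submanifold_chart M p W \<Psi> L" and p: "p \<in> M"
    and v: "v \<in> tangent_space M p" and w: "w \<in> tangent_space M p"
    and lagrange: "\<And>a. fd sq_xy p a = l * fd H p a"
  shows "dirderiv2 (sq_xy \<circ> inv_into W \<Psi>) (fd \<Psi> p v) (fd \<Psi> p w) (\<Psi> p)
    = dirderiv2 sq_xy v w p - l * dirderiv2 H v w p"
proof (rule submanifold_chart_hessian_lagrange[OF c p _ smooth_on_H _ _ lagrange])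
  show "p \<in> off_t_axis" using p mem_M_iff by blast
  show "smooth_on off_t_axis sq_xy" by (rule smooth_on_subset[OF smooth_on_sq_xy open_off_t_axis]) simp
  show "H x = 0" if "x \<in> M" for x using that mem_M_iff by blast
  show "fd \<Psi> p v \<in> L" "fd \<Psi> p w \<in> L" using submanifold_chart_fd_mem[OF c p] v w by blast+
qed

lemma chart_hessian_crit_axis:
  assumes p: "(0, 0, z, t) \<in> M" and chart: "submanifold_chart M (0, 0, z, t) W \<Psi> L"
    and v: "(a, b, c, d) \<in> tangent_space M (0, 0, z, t)"
    and w: "(a', b', c', d') \<in> tangent_space M (0, 0, z, t)"
  shows "dirderiv2 (sq_xy \<circ> inv_into W \<Psi>) (fd \<Psi> (0, 0, z, t) (a, b, c, d))
      (fd \<Psi> (0, 0, z, t) (a', b', c', d')) (\<Psi> (0, 0, z, t)) = 2 * (a * a' + b * b')"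
proof -
  have "fd sq_xy (0, 0, z, t) e = 0 * fd H (0, 0, z, t) e" for e
    by (cases e) (simp add: fd_sq_xy)
  from chart_hessian_sq_xy[OF chart p v w this] show ?thesis by (simp add: dirderiv2_sq_xy)
qed

lemma chart_hessian_crit_circle:
  assumes p: "(x, y, 0, 0) \<in> crit_circle" and chart: "submanifold_chart M (x, y, 0, 0) W \<Psi> L"
    and v: "(a, b, c, d) \<in> tangent_space M (x, y, 0, 0)"
    and w: "(a', b', c', d') \<in> tangent_space M (x, y, 0, 0)"
  shows "dirderiv2 (sq_xy \<circ> inv_into W \<Psi>) (fd \<Psi> (x, y, 0, 0) (a, b, c, d))
      (fd \<Psi> (x, y, 0, 0) (a', b', c', d')) (\<Psi> (x, y, 0, 0))
    = - 2 * c * c' - d * d' * dirderiv2 h (0, 1) (0, 1) (\<rho>\<^sub>0, 0) / h\<^sub>\<rho> (\<rho>\<^sub>0, 0)"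
proof -
  have pM: "(x, y, 0, 0) \<in> M" using p crit_circle_subset_M by blast
  have pU: "(x, y, 0, 0) \<in> off_t_axis" using pM mem_M_iff by blast
  have D: "open ({0<..} \<times> UNIV :: (real \<times> real) set)" "(\<rho>\<^sub>0, 0) \<in> {0<..} \<times> UNIV"
    using smooth rho0_pos by (simp_all add: smooth_on_def)
  define R T where "R = h\<^sub>\<rho> (\<rho>\<^sub>0, 0)" and "T = dirderiv2 h (0, 1) (0, 1) (\<rho>\<^sub>0, 0)"
  have R: "R > 0" using hrho_rho0_pos by (simp add: R_def)
  have lagrange: "fd sq_xy (x, y, 0, 0) e = inverse R * fd H (x, y, 0, 0) e" for e
    using fd_H[of x y 0 0] pU p ht_rho0 R by (cases e) (simp add: fd_sq_xy R_def)
  txt \<open>The \<open>h\<^sub>t\<^sub>t\<close> term is all that survives of \<open>Hess h\<close>, because \<open>d\<rho> = 2 (x dx + y dy + z dz)\<close>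
    vanishes on \<open>T\<^sub>pM\<close>.\<close>
  have "x * a + y * b = 0" "x * a' + y * b' = 0"
    using tangent_crit_circle_M[OF p] v w by simp_all
  then have "rho_t_deriv (x, y, 0, 0) (a, b, c, d) = d *\<^sub>R (0, 1)"
    "rho_t_deriv (x, y, 0, 0) (a', b', c', d') = d' *\<^sub>R (0, 1)"
    by simp_all
  moreover have "rho_t (x, y, 0, 0) = (\<rho>\<^sub>0, 0)" using p by simp
  moreover have "dirderiv2 h (d *\<^sub>R (0, 1)) (d' *\<^sub>R (0, 1)) (\<rho>\<^sub>0, 0) = d * d' * T"
    unfolding T_def
    by (rule dirderiv2_scaleR[OF D differentiable_h smooth_on_imp_differentiable[OF smooth_on_fd[OF smooth] D(2)]])
  ultimately have "dirderiv2 H (a, b, c, d) (a', b', c', d') (x, y, 0, 0)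
      = d * d' * T + 2 * (a * a' + b * b' + c * c') * R"
    using dirderiv2_H[OF pU] fd_h[OF D(2)] by (simp add: R_def algebra_simps)
  then show ?thesis
    using chart_hessian_sq_xy[OF chart pM v w lagrange] R
    by (simp add: dirderiv2_sq_xy field_simps flip: R_def T_def)
qed

lemma hessian_kernel_crit_axis:
  assumes p: "p \<in> crit_axis" and chart: "submanifold_chart M p W \<Psi> L" and v: "v \<in> tangent_space M p"
  shows "(\<forall>w\<in>tangent_space M p. dirderiv2 (sq_xy \<circ> inv_into W \<Psi>) (fd \<Psi> p v) (fd \<Psi> p w) (\<Psi> p) = 0)
    \<longleftrightarrow> v \<in> tangent_space (crit_axis \<union> crit_circle) p"
proof -
  obtain z t where xyzt: "p = (0, 0, z, t)" and pM: "(0, 0, z, t) \<in> M"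
    using p by (cases p) auto
  obtain a b c d where abcd: "v = (a, b, c, d)" by (cases v)
  define Q where "Q w = dirderiv2 (sq_xy \<circ> inv_into W \<Psi>) (fd \<Psi> p v) (fd \<Psi> p w) (\<Psi> p)" for w
  have Q: "Q (a', b', c', d') = 2 * (a * a' + b * b')"
    if "(a', b', c', d') \<in> tangent_space M p" for a' b' c' d'
    using chart_hessian_crit_axis[OF pM] chart v that by (simp add: Q_def xyzt abcd)
  have e12: "(1, 0, 0, 0) \<in> tangent_space M p" "(0, 1, 0, 0) \<in> tangent_space M p"
    using tangent_space_M[OF pM] fd_H pM xyzt by simp_all
  have "(\<forall>w\<in>tangent_space M p. Q w = 0) \<longleftrightarrow> a = 0 \<and> b = 0"
  proof
    assume "\<forall>w\<in>tangent_space M p. Q w = 0"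
    then show "a = 0 \<and> b = 0" using Q[OF e12(1)] Q[OF e12(2)] e12 by simp
  next
    assume "a = 0 \<and> b = 0"
    show "\<forall>w\<in>tangent_space M p. Q w = 0"
    proof
      fix w assume "w \<in> tangent_space M p"
      moreover obtain a' b' c' d' where "w = (a', b', c', d')" by (cases w)
      ultimately show "Q w = 0" using Q \<open>a = 0 \<and> b = 0\<close> by simp
    qed
  qed
  moreover have "fd H p v = 0" using v tangent_space_M[OF pM] xyzt by simp
  ultimately show ?thesis
    using tangent_space_crit_axis[OF p] by (simp add: Q_def abcd)
qed

lemma hessian_kernel_crit_circle:
  assumes p: "p \<in> crit_circle" and chart: "submanifold_chart M p W \<Psi> L" and v: "v \<in> tangent_space M p"
  shows "(\<forall>w\<in>tangent_space M p. dirderiv2 (sq_xy \<circ> inv_into W \<Psi>) (fd \<Psi> p v) (fd \<Psi> p w) (\<Psi> p) = 0)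
    \<longleftrightarrow> v \<in> tangent_space (crit_axis \<union> crit_circle) p"
proof -
  obtain x y where xyzt: "p = (x, y, 0, 0)" and p': "(x, y, 0, 0) \<in> crit_circle"
    using p by (cases p) auto
  have pM: "(x, y, 0, 0) \<in> M" using p' crit_circle_subset_M by blast
  obtain a b c d where abcd: "v = (a, b, c, d)" by (cases v)
  define Q where "Q w = dirderiv2 (sq_xy \<circ> inv_into W \<Psi>) (fd \<Psi> p v) (fd \<Psi> p w) (\<Psi> p)" for w
  have Q: "Q (a', b', c', d') = - 2 * c * c' - d * d' * dirderiv2 h (0, 1) (0, 1) (\<rho>\<^sub>0, 0) / h\<^sub>\<rho> (\<rho>\<^sub>0, 0)"
    if "(a', b', c', d') \<in> tangent_space M p" for a' b' c' d'
    using chart_hessian_crit_circle[OF p'] chart v that by (simp add: Q_def xyzt abcd)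
  have e34: "(0, 0, 1, 0) \<in> tangent_space M p" "(0, 0, 0, 1) \<in> tangent_space M p"
    using tangent_space_M[OF pM] fd_H pM p' xyzt ht_rho0 by simp_all
  have nz: "dirderiv2 h (0, 1) (0, 1) (\<rho>\<^sub>0, 0) \<noteq> 0" "h\<^sub>\<rho> (\<rho>\<^sub>0, 0) \<noteq> 0"
    using htt hrho_rho0_pos by simp_all
  have "(\<forall>w\<in>tangent_space M p. Q w = 0) \<longleftrightarrow> c = 0 \<and> d = 0"
  proof
    assume "\<forall>w\<in>tangent_space M p. Q w = 0"
    then show "c = 0 \<and> d = 0" using Q[OF e34(1)] Q[OF e34(2)] e34 nz by simp
  next
    assume "c = 0 \<and> d = 0"
    show "\<forall>w\<in>tangent_space M p. Q w = 0"
    proof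
      fix w assume "w \<in> tangent_space M p"
      moreover obtain a' b' c' d' where "w = (a', b', c', d')" by (cases w)
      ultimately show "Q w = 0" using Q \<open>c = 0 \<and> d = 0\<close> by simp
    qed
  qed
  moreover have "x * a + y * b = 0" using tangent_crit_circle_M[OF p'] v xyzt abcd by simp
  ultimately show ?thesis
    using tangent_space_crit_circle[OF p] xyzt abcd by (simp add: Q_def fd_sq_xy_minus)
qed

lemma morse_bott_on_sq_xy: "morse_bott_on M sq_xy"
  unfolding morse_bott_on_def
proof (intro conjI embedded_submanifold_M embedded_submanifold_crit_set ballI allI impI)
  fix p W \<Psi> L v
  assume "p \<in> crit_set sq_xy M" "submanifold_chart M p W \<Psi> L" "v \<in> tangent_space M p"
  then show "(\<forall>w\<in>tangent_space M p. dirderiv2 (sq_xy \<circ> inv_into W \<Psi>) (fd \<Psi> p v) (fd \<Psi> p w) (\<Psi> p) = 0)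
      \<longleftrightarrow> v \<in> tangent_space (crit_set sq_xy M) p"
    unfolding crit_set_sq_xy using hessian_kernel_crit_axis hessian_kernel_crit_circle by blast
qed

end

theorem lemma6p1:
  fixes h :: "real \<times> real \<Rightarrow> real" and \<rho>\<^sub>0 :: real
  defines "h\<^sub>\<rho> \<equiv> dirderiv h (1, 0)" and "h\<^sub>t \<equiv> dirderiv h (0, 1)"
  assumes smooth: "smooth_on ({0<..} \<times> UNIV) h"
    and regular: "\<And>\<rho> t. \<rho> > 0 \<Longrightarrow> h (\<rho>, t) = 0 \<Longrightarrow> (h\<^sub>\<rho> (\<rho>, t), h\<^sub>t (\<rho>, t)) \<noteq> (0, 0)"
    and conn: "connected {(\<rho>, t). \<rho> > 0 \<and> h (\<rho>, t) = 0}"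
    and rho0: "\<rho>\<^sub>0 > 0" "{\<rho>. \<rho> > 0 \<and> h (\<rho>, 0) = 0} = {\<rho>\<^sub>0}"
    and ht_zero: "{(\<rho>, t). \<rho> > 0 \<and> h (\<rho>, t) = 0 \<and> h\<^sub>t (\<rho>, t) = 0} = {(\<rho>\<^sub>0, 0)}"
    and transv: "\<And>\<rho> t. \<rho> > 0 \<Longrightarrow> h (\<rho>, t) = 0 \<Longrightarrow> \<rho> * h\<^sub>\<rho> (\<rho>, t) - t * h\<^sub>t (\<rho>, t) > 0"
    and htt: "dirderiv2 h (0, 1) (0, 1) (\<rho>\<^sub>0, 0) < 0"
  shows "morse_bott_on
           {p :: real \<times> real \<times> real \<times> real. case p of (x, y, z, t) \<Rightarrow>
              x\<^sup>2 + y\<^sup>2 + z\<^sup>2 > 0 \<and> h (x\<^sup>2 + y\<^sup>2 + z\<^sup>2, t) = 0}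
           (\<lambda>(x, y, z, t). x\<^sup>2 + y\<^sup>2)"
proof -
  have "contact_sum_profile h \<rho>\<^sub>0"
    using smooth regular rho0 ht_zero transv htt
    unfolding contact_sum_profile_def h\<^sub>\<rho>_def h\<^sub>t_def by blast
  then interpret contact_sum_profile h \<rho>\<^sub>0 .
  have "(\<lambda>(x, y, z, t). x\<^sup>2 + y\<^sup>2) = sq_xy"
    by (auto simp: fun_eq_iff)
  then show ?thesis
    using morse_bott_on_sq_xy unfolding M_def by simp
qed

end
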